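(* Let $\beta>0$ and $\eta>0$ be fixed and let $T>0$. Assume that $u\in C([0,T];\mathcal{F}_{3,3}(\mathbb{R}))$ is a solution of $$u_t+uu_x+\beta\mathcal{H}u_{xx}+\eta(\mathcal{H}u_x-u_{xx})=0,\quad x\in\mathbb{R},\ t\in[0,T].$$ Then $u(t)=0$ for all $t\in[0,T]$.
   Context: $\mathcal{H}$ is the Hilbert transform, $\mathcal{H}f=(i\,\mathrm{sgn}(\xi)\widehat f(\xi))^\vee$, with $\widehat f(\xi)=(2\pi)^{-1/2}\int f(x)e^{-ix\xi}dx$. For $r\in\mathbb{R}$, $L^2_r(\mathbb{R})$ is the space of measurable $f$ with $\|f\|_{L^2_r}^2=\int(1+x^2)^r|f(x)|^2dx<\infty$, and $\mathcal{F}_{s,r}=H^s(\mathbb{R})\cap L^2_r(\mathbb{R})$ with norm $\|f\|^2_{\mathcal{F}_{s,r}}=\|f\|_{H^s}^2+\|f\|_{L^2_r}^2$. The solution satisfies the integral equation $u(t)=S(t)u(0)-\int_0^tS(t-\tau)[uu_x](\tau)d\tau$ with $S(t)f=(e^{i\beta\xi|\xi|t-\eta(\xi^2-|\xi|)t}\widehat f)^\vee$. *)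

theory Defs
  imports "HOL-Analysis.Analysis"
begin

text \<open>It is given by the Lebesgue integral; it is only applied to functions in L^1
  (every element of L^2_r with r > 1/2 is in L^1, and products of two L^2 functions are in L^1).\<close>
definition FT :: "(real \<Rightarrow> real) \<Rightarrow> real \<Rightarrow> complex" where
  "FT f \<xi> = complex_of_real (1 / sqrt (2 * pi)) *
     (\<integral>x. complex_of_real (f x) * cis (- (x * \<xi>)) \<partial>lborel)"

definition L2w :: "real \<Rightarrow> (real \<Rightarrow> real) \<Rightarrow> bool" where
  "L2w r f \<longleftrightarrow> f \<in> borel_measurable lborel \<and>
     integrable lborel (\<lambda>x. (1 + x\<^sup>2) powr r * (f x)\<^sup>2)"

definition L2w_sq :: "real \<Rightarrow> (real \<Rightarrow> real) \<Rightarrow> real" where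
  "L2w_sq r f = (\<integral>x. (1 + x\<^sup>2) powr r * (f x)\<^sup>2 \<partial>lborel)"

definition Hs_sq :: "real \<Rightarrow> (real \<Rightarrow> real) \<Rightarrow> real" where
  "Hs_sq s f = (\<integral>\<xi>. (1 + \<xi>\<^sup>2) powr s * (cmod (FT f \<xi>))\<^sup>2 \<partial>lborel)"

text \<open>Membership in F_{s,r} = H^s \<inter> L^2_r (used for r > 1/2, where f \<in> L^1).\<close>
definition inF :: "real \<Rightarrow> real \<Rightarrow> (real \<Rightarrow> real) \<Rightarrow> bool" where
  "inF s r f \<longleftrightarrow> L2w r f \<and> L2w 0 f \<and>
     integrable lborel (\<lambda>\<xi>. (1 + \<xi>\<^sup>2) powr s * (cmod (FT f \<xi>))\<^sup>2)"

definition Fnorm :: "real \<Rightarrow> real \<Rightarrow> (real \<Rightarrow> real) \<Rightarrow> real" where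
  "Fnorm s r f = sqrt (Hs_sq s f + L2w_sq r f)"

text \<open>Fourier multiplier of the linear part: S(t) has symbol exp(t * sym beta eta xi).\<close>
definition sym :: "real \<Rightarrow> real \<Rightarrow> real \<Rightarrow> complex" where
  "sym \<beta> \<eta> \<xi> = \<i> * complex_of_real (\<beta> * \<xi> * \<bar>\<xi>\<bar>) - complex_of_real (\<eta> * (\<xi>\<^sup>2 - \<bar>\<xi>\<bar>))"

text \<open>u : [0,T] \<rightarrow> F_{3,3} is a (mild) solution: u \<in> C([0,T]; F_{3,3}) and the integral equation
  u(t) = S(t)u(0) - int_0^t S(t-tau)[u u_x](tau) dtau holds, written on the Fourier side
  (a.e. in xi), using (u u_x)^ = (i xi / 2) (u^2)^.\<close>
definition mild_solution :: "real \<Rightarrow> real \<Rightarrow> real \<Rightarrow> (real \<Rightarrow> real \<Rightarrow> real) \<Rightarrow> bool" where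
  "mild_solution \<beta> \<eta> T u \<longleftrightarrow>
     (\<forall>t\<in>{0..T}. inF 3 3 (u t)) \<and>
     (\<forall>t\<in>{0..T}. ((\<lambda>\<tau>. Fnorm 3 3 (\<lambda>x. u \<tau> x - u t x)) \<longlongrightarrow> 0) (at t within {0..T})) \<and>
     (\<forall>t\<in>{0..T}. AE \<xi> in lborel.
        set_integrable lborel {0..t}
          (\<lambda>\<tau>. exp (sym \<beta> \<eta> \<xi> * complex_of_real (t - \<tau>)) * (\<i> * complex_of_real \<xi> / 2)
                 * FT (\<lambda>x. (u \<tau> x)\<^sup>2) \<xi>) \<and>
        FT (u t) \<xi> = exp (sym \<beta> \<eta> \<xi> * complex_of_real t) * FT (u 0) \<xi>
          - set_lebesgue_integral lborel {0..t}
              (\<lambda>\<tau>. exp (sym \<beta> \<eta> \<xi> * complex_of_real (t - \<tau>)) * (\<i> * complex_of_real \<xi> / 2)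
                 * FT (\<lambda>x. (u \<tau> x)\<^sup>2) \<xi>))"

end

(*
  The symbol of the linear part, i beta xi |xi| - eta (xi^2 - |xi|), is not smooth at the
  origin: the multiplier of S(s) is 1 + s eta |xi| + O(xi^2), with an even first-order term.
  Since u(t) has three moments, its Fourier transform is C^2 near 0, and the integral equation,
  which holds for almost every frequency, can be expanded at pairs of frequencies +-eps.
  The even part of the expansion at order eps forces T eta FT(u 0)(0) = 0, i.e. u(0) has
  mean zero.  The odd part at order eps^2 then yields, for every t in [0,T],
    2 t (INT x * u(0,x) dx) + (INT_0^t (t - tau) ||u(tau)||^2 dtau) = 0.
  Letting t -> 0 kills the first moment of u(0); for t = T the remaining integral of a
  nonnegative continuous function vanishes, so ||u(tau)||^2 = 0 on [0,T].
*)
theory Submission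
  imports Defs "HOL-Probability.Sinc_Integral"
begin

lemma abs_mult_le_weighted_squares:
  fixes a b w :: real
  assumes "w > 0"
  shows "\<bar>a * b\<bar> \<le> w * a\<^sup>2 + b\<^sup>2 / w"
proof -
  have "0 \<le> (w * \<bar>a\<bar> - \<bar>b\<bar>)\<^sup>2 / w" using assms by simp
  also have "\<dots> = w * a\<^sup>2 + b\<^sup>2 / w - 2 * \<bar>a * b\<bar>"
    using assms by (simp add: power2_eq_square field_simps abs_mult)
  finally show ?thesis by simp
qed

lemma abs_sin_minus_self_le:
  fixes y :: real
  shows "\<bar>sin y - y\<bar> \<le> y\<^sup>2 / 2" and "\<bar>sin y - y\<bar> \<le> \<bar>y\<bar> ^ 3 / 6"
  using Maclaurin_sin_bound[of y 2] Maclaurin_sin_bound[of y 3]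
  by (simp_all add: numeral_2_eq_2 numeral_3_eq_3 sin_coeff_Suc cos_coeff_Suc power2_abs)

lemma norm_cis_minus_1_le: "cmod (cis a - 1) \<le> \<bar>a\<bar>"
proof -
  have "(cmod (cis a - 1))\<^sup>2 = 2 * (1 - cos a)"
    using sin_cos_squared_add[of a] by (simp add: cmod_def cis.code power2_eq_square algebra_simps)
  also have "\<dots> = 4 * (sin (a / 2))\<^sup>2"
    using cos_double_sin[of "a / 2"] by simp
  also have "\<dots> \<le> 4 * (a / 2)\<^sup>2"
    using abs_le_square_iff[THEN iffD1, OF abs_sin_x_le_abs_x] by simp
  finally show ?thesis
    by (simp add: abs_le_square_iff[symmetric] power_divide)
qed

lemma norm_cis_add_cis_uminus_minus_2_le: "cmod (cis a + cis (- a) - 2) \<le> a\<^sup>2"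
proof -
  have "cis a + cis (- a) - 2 = complex_of_real (2 * cos a - 2)"
    by (simp add: cis.code complex_eq_iff)
  moreover have "\<bar>2 * cos a - 2\<bar> = 4 * (sin (a / 2))\<^sup>2"
    using cos_double_sin[of "a / 2"] by simp
  moreover have "4 * (sin (a / 2))\<^sup>2 \<le> 4 * (a / 2)\<^sup>2"
    using abs_le_square_iff[THEN iffD1, OF abs_sin_x_le_abs_x] by simp
  ultimately show ?thesis
    by (simp add: power_divide del: of_real_diff)
qed

lemma norm_exp_minus_1_minus_self_le:
  fixes z :: "'a::{real_normed_field, banach}"
  assumes "norm z \<le> 1"
  shows "norm (exp z - 1 - z) \<le> (norm z)\<^sup>2"
proof -
  have summable: "summable (\<lambda>n. norm (inverse (fact (n + 2)) *\<^sub>R z ^ (n + 2)))"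
    using summable_ignore_initial_segment[OF summable_norm_exp[of z], of 2]
    by (simp add: divide_inverse_commute scaleR_conv_of_real)
  have "norm (exp z - 1 - z) = norm (\<Sum>n. inverse (fact (n + 2)) *\<^sub>R z ^ (n + 2))"
    using exp_first_two_terms[of z] by simp
  also have "\<dots> \<le> (\<Sum>n. norm (inverse (fact (n + 2)) *\<^sub>R z ^ (n + 2)))"
    by (rule summable_norm[OF summable])
  also have "\<dots> = (\<Sum>n. inverse (fact (n + 2)) *\<^sub>R norm z ^ (n + 2))"
    by (simp add: norm_power norm_mult)
  also have "\<dots> = exp (norm z) - 1 - norm z"
    using exp_first_two_terms[of "norm z"] by simp
  also have "\<dots> \<le> (norm z)\<^sup>2"
    using exp_bound[of "norm z"] assms by simp
  finally show ?thesis .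
qed

lemma square_le_abs:
  fixes x :: real
  assumes "\<bar>x\<bar> \<le> 1"
  shows "x\<^sup>2 \<le> \<bar>x\<bar>"
proof -
  have "\<bar>x\<bar> * \<bar>x\<bar> \<le> \<bar>x\<bar> * 1"
    using assms by (intro mult_left_mono) auto
  then show ?thesis
    by (simp add: power2_eq_square)
qed

lemma norm_sum_products_expansion_le:
  fixes a b x y z w :: "'a::real_normed_field"
  shows "norm (a * x + b * y - 2 * (1 + w) * z)
    \<le> norm (a - 1 - w) * norm x + norm (b - 1 - w) * norm y + norm (1 + w) * norm (x + y - 2 * z)"
proof -
  have "a * x + b * y - 2 * (1 + w) * z = (a - 1 - w) * x + (b - 1 - w) * y + (1 + w) * (x + y - 2 * z)"
    by (simp add: algebra_simps)
  then have "norm (a * x + b * y - 2 * (1 + w) * z)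
      = norm ((a - 1 - w) * x + (b - 1 - w) * y + (1 + w) * (x + y - 2 * z))"
    by (simp only:)
  also have "\<dots> \<le> norm ((a - 1 - w) * x) + norm ((b - 1 - w) * y) + norm ((1 + w) * (x + y - 2 * z))"
    by (intro norm_triangle_le add_right_mono norm_triangle_ineq)
  finally show ?thesis
    by (simp only: norm_mult)
qed

lemma norm_diff_products_expansion_le:
  fixes a b x y w :: "'a::real_normed_field"
  shows "norm (a * x - b * y - (1 + w) * (x - y)) \<le> norm (a - 1 - w) * norm x + norm (b - 1 - w) * norm y"
proof -
  have "a * x - b * y - (1 + w) * (x - y) = (a - 1 - w) * x - (b - 1 - w) * y"
    by (simp add: algebra_simps)
  then have "norm (a * x - b * y - (1 + w) * (x - y)) = norm ((a - 1 - w) * x - (b - 1 - w) * y)"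
    by (simp only:)
  also have "\<dots> \<le> norm ((a - 1 - w) * x) + norm ((b - 1 - w) * y)"
    by (rule norm_triangle_ineq4)
  finally show ?thesis
    by (simp only: norm_mult)
qed

lemma norm_diff_products_le:
  fixes a b x y z :: "'a::real_normed_field"
  shows "norm (a * x - b * y) \<le> norm (a - 1) * norm x + norm (b - 1) * norm y + norm (x - z) + norm (y - z)"
proof -
  have "a * x - b * y = (a - 1) * x - (b - 1) * y + ((x - z) - (y - z))"
    by (simp add: algebra_simps)
  then have "norm (a * x - b * y) = norm ((a - 1) * x - (b - 1) * y + ((x - z) - (y - z)))"
    by (simp only:)
  also have "\<dots> \<le> (norm ((a - 1) * x) + norm ((b - 1) * y)) + (norm (x - z) + norm (y - z))"
    by (intro norm_triangle_le add_mono norm_triangle_ineq4)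
  finally show ?thesis
    by (simp only: norm_mult add.assoc)
qed

lemma norm_1_plus_of_real_le:
  assumes "0 \<le> s" "s \<le> t" "0 \<le> \<eta>" "0 \<le> \<epsilon>" "\<epsilon> \<le> 1"
  shows "norm (1 + complex_of_real (s * \<eta> * \<epsilon>)) \<le> 1 + t * \<eta>"
proof -
  have "norm (1 + complex_of_real (s * \<eta> * \<epsilon>)) = 1 + s * \<eta> * \<epsilon>"
    using assms by (metis abs_of_nonneg add_nonneg_nonneg mult_nonneg_nonneg norm_of_real of_real_1
        of_real_add zero_le_one)
  also have "s * \<eta> * \<epsilon> \<le> t * \<eta> * 1"
    using assms by (intro mult_mono) auto
  finally show ?thesis
    by simp
qed

lemma norm_ii_half_mult: "norm (\<i> * complex_of_real \<xi> / 2 * z) = \<bar>\<xi>\<bar> / 2 * norm z"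
  by (simp add: norm_mult norm_divide)

section \<open>Almost everywhere expansions and integrals\<close>

lemma AE_lborel_uminus:
  fixes P :: "real \<Rightarrow> bool"
  assumes "AE x in lborel. P x"
  shows "AE x in lborel. P (- x)"
proof -
  obtain N where N: "N \<in> null_sets lborel" "{x. \<not> P x} \<subseteq> N"
    using assms unfolding eventually_ae_filter by auto
  then have "N \<in> null_sets (distr lborel borel uminus)"
    by (simp add: lborel_distr_uminus)
  then have "uminus -` N \<in> null_sets lborel"
    by (subst (asm) null_sets_distr_iff) auto
  then show ?thesis
    by (rule AE_I') (use N(2) in auto)
qed

lemma AE_lborel_obtain_between:
  fixes P :: "real \<Rightarrow> bool"
  assumes "AE x in lborel. P x" and "a < b"
  obtains x where "a < x" "x < b" "P x"
proof -
  from assms(1) obtain N where N: "N \<in> null_sets lborel" "{x. \<not> P x} \<subseteq> N"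
    unfolding eventually_ae_filter by auto
  have "{a<..<b} \<notin> null_sets lborel"
    using assms(2) by (simp add: null_sets_def)
  then have "\<not> {a<..<b} \<subseteq> N"
    using null_sets_subset[OF N(1), of "{a<..<b}"] by auto
  then obtain x where "x \<in> {a<..<b}" "x \<notin> N"
    by blast
  with N(2) show ?thesis
    by (intro that[of x]) auto
qed

lemma tendsto_expansion_coeffs_eq_0:
  fixes \<alpha> \<beta> :: "'a::real_normed_vector" and e :: "nat \<Rightarrow> real"
  assumes e: "e \<longlonglongrightarrow> 0" and e_pos: "\<And>n. e n > 0" and d: "d \<longlonglongrightarrow> 0"
    and bound: "\<And>n. norm (\<alpha> + e n *\<^sub>R \<beta> + e n *\<^sub>R d n) \<le> K * (e n)\<^sup>2"
  shows "\<alpha> = 0 \<and> \<beta> = 0"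
proof -
  have "(\<lambda>n. K * (e n)\<^sup>2) \<longlonglongrightarrow> K * 0\<^sup>2"
    by (intro tendsto_mult tendsto_const tendsto_power e)
  then have "(\<lambda>n. K * (e n)\<^sup>2) \<longlonglongrightarrow> 0"
    by simp
  then have "(\<lambda>n. \<alpha> + e n *\<^sub>R \<beta> + e n *\<^sub>R d n) \<longlonglongrightarrow> 0"
    by (rule Lim_null_comparison[rotated]) (use bound in auto)
  moreover have "(\<lambda>n. \<alpha> + e n *\<^sub>R \<beta> + e n *\<^sub>R d n) \<longlonglongrightarrow> \<alpha> + 0 *\<^sub>R \<beta> + 0 *\<^sub>R 0"
    by (intro tendsto_add tendsto_scaleR tendsto_const e d)
  ultimately have \<alpha>: "\<alpha> = 0"
    using LIMSEQ_unique by fastforce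
  have "norm (\<beta> + d n) \<le> K * e n" for n
  proof -
    have "e n * norm (\<beta> + d n) \<le> e n * (K * e n)"
      using bound[of n] e_pos[of n] \<alpha> by (simp add: scaleR_add_right[symmetric] power2_eq_square mult_ac)
    then show ?thesis
      using e_pos[of n] by simp
  qed
  then have "(\<lambda>n. \<beta> + d n) \<longlonglongrightarrow> 0"
    by (intro Lim_null_comparison[OF always_eventually tendsto_mult_right_zero[OF e]]) auto
  moreover have "(\<lambda>n. \<beta> + d n) \<longlonglongrightarrow> \<beta>"
    using tendsto_add[OF tendsto_const d] by simp
  ultimately show ?thesis
    using \<alpha> LIMSEQ_unique by blast
qed

lemma AE_expansion_coeffs_eq_0:
  fixes \<alpha> \<beta> :: "'a::real_normed_vector" and d :: "real \<Rightarrow> 'a"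
  assumes P: "AE \<xi> in lborel. P \<xi>" and d: "(d \<longlongrightarrow> 0) (at_right 0)"
    and bound: "\<forall>\<^sub>F \<epsilon> in at_right 0. P \<epsilon> \<longrightarrow> P (- \<epsilon>) \<longrightarrow>
      norm (\<alpha> + \<epsilon> *\<^sub>R \<beta> + \<epsilon> *\<^sub>R d \<epsilon>) \<le> K * \<epsilon>\<^sup>2"
  shows "\<alpha> = 0 \<and> \<beta> = 0"
proof -
  obtain b where b: "b > 0"
    and b_bound: "\<And>\<epsilon>. 0 < \<epsilon> \<Longrightarrow> \<epsilon> < b \<Longrightarrow> P \<epsilon> \<Longrightarrow> P (- \<epsilon>) \<Longrightarrow>
      norm (\<alpha> + \<epsilon> *\<^sub>R \<beta> + \<epsilon> *\<^sub>R d \<epsilon>) \<le> K * \<epsilon>\<^sup>2"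
    using bound by (auto simp: eventually_at_right_field)
  have P_sym: "AE \<xi> in lborel. P \<xi> \<and> P (- \<xi>)"
    using P AE_lborel_uminus[OF P] by eventually_elim simp
  have "\<exists>\<epsilon>. 0 < \<epsilon> \<and> \<epsilon> < min b (inverse (Suc n)) \<and> P \<epsilon> \<and> P (- \<epsilon>)" for n
    using AE_lborel_obtain_between[OF P_sym, of 0 "min b (inverse (Suc n))"] b by auto
  then obtain e where e: "\<And>n. 0 < e n \<and> e n < min b (inverse (Suc n)) \<and> P (e n) \<and> P (- e n)"
    by metis
  have e_lim: "e \<longlonglongrightarrow> 0"
    by (rule Lim_null_comparison[OF always_eventually LIMSEQ_inverse_real_of_nat])
       (use e in \<open>auto simp: less_imp_le\<close>)
  have "filterlim e (at_right 0) sequentially"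
    using e by (intro tendsto_imp_filterlim_at_right[OF e_lim]) auto
  then have d_lim: "(\<lambda>n. d (e n)) \<longlonglongrightarrow> 0"
    using filterlim_compose[OF d] by blast
  have e_pos: "0 < e n" for n
    using e by blast
  have "norm (\<alpha> + e n *\<^sub>R \<beta> + e n *\<^sub>R d (e n)) \<le> K * (e n)\<^sup>2" for n
    by (rule b_bound) (use e[of n] in auto)
  then show ?thesis
    by (rule tendsto_expansion_coeffs_eq_0[OF e_lim e_pos d_lim])
qed

lemma norm_set_integral_Icc_le:
  fixes f :: "real \<Rightarrow> 'a::{banach, second_countable_topology}"
  assumes "set_integrable lborel {a..b} f" "a \<le> b" "\<And>\<tau>. \<tau> \<in> {a..b} \<Longrightarrow> norm (f \<tau>) \<le> B"
  shows "norm (LINT \<tau>:{a..b}|lborel. f \<tau>) \<le> B * (b - a)"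
proof -
  have "norm (LINT \<tau>:{a..b}|lborel. f \<tau>) \<le> (LINT \<tau>:{a..b}|lborel. norm (f \<tau>))"
    by (rule set_integral_norm_bound[OF assms(1)])
  also have "\<dots> \<le> (LINT \<tau>:{a..b}|lborel. B)"
  proof (rule set_integral_mono)
    show "set_integrable lborel {a..b} (\<lambda>\<tau>. B)"
      unfolding set_integrable_def by (rule borel_integrable_compact) auto
  qed (use assms(1,3) set_integrable_norm in auto)
  also have "\<dots> = B * (b - a)"
    using assms(2) by (simp add: set_integral_const)
  finally show ?thesis .
qed

lemma continuous_nonneg_set_integral_eq_0:
  fixes h :: "real \<Rightarrow> real"
  assumes "continuous_on {a..b} h" "\<And>x. x \<in> {a..b} \<Longrightarrow> 0 \<le> h x"
    and "(LINT x:{a..b}|lborel. h x) = 0" "a < b" "x \<in> {a..b}"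
  shows "h x = 0"
proof (rule has_integral_0_cbox_imp_0[where f = h and a = a and b = b])
  have "set_integrable lborel {a..b} h"
    unfolding set_integrable_def by (rule borel_integrable_compact[OF compact_Icc assms(1)])
  from set_borel_integral_eq_integral[OF this] show "(h has_integral 0) (cbox a b)"
    using assms(3) by (auto simp: has_integral_iff)
qed (use assms in auto)

lemma abs_integral_square_diff_le:
  fixes f g :: "'a \<Rightarrow> real"
  assumes [measurable]: "f \<in> borel_measurable M" "g \<in> borel_measurable M"
    and f: "integrable M (\<lambda>x. (f x)\<^sup>2)" and g: "integrable M (\<lambda>x. (g x)\<^sup>2)" and "e > 0"
  shows "\<bar>(\<integral>x. (f x)\<^sup>2 \<partial>M) - (\<integral>x. (g x)\<^sup>2 \<partial>M)\<bar>
    \<le> 2 * e * ((\<integral>x. (f x)\<^sup>2 \<partial>M) + (\<integral>x. (g x)\<^sup>2 \<partial>M)) + (\<integral>x. (f x - g x)\<^sup>2 \<partial>M) / e"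
proof -
  have sum_sq: "(a + b)\<^sup>2 \<le> 2 * (a\<^sup>2 + b\<^sup>2)" "(a - b)\<^sup>2 \<le> 2 * (a\<^sup>2 + b\<^sup>2)" for a b :: real
    using zero_le_power2[of "a - b"] zero_le_power2[of "a + b"] by (simp_all add: power2_eq_square algebra_simps)
  have diff: "integrable M (\<lambda>x. (f x - g x)\<^sup>2)"
    by (rule Bochner_Integration.integrable_bound[where f = "\<lambda>x. 2 * ((f x)\<^sup>2 + (g x)\<^sup>2)"])
      (use f g sum_sq in auto)
  have "\<bar>(\<integral>x. (f x)\<^sup>2 \<partial>M) - (\<integral>x. (g x)\<^sup>2 \<partial>M)\<bar> = \<bar>\<integral>x. (f x + g x) * (f x - g x) \<partial>M\<bar>"
    using f g by (simp add: power2_eq_square algebra_simps)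
  also have "\<dots> \<le> (\<integral>x. \<bar>(f x + g x) * (f x - g x)\<bar> \<partial>M)"
    by (rule integral_abs_bound)
  also have "\<dots> \<le> (\<integral>x. 2 * e * ((f x)\<^sup>2 + (g x)\<^sup>2) + (f x - g x)\<^sup>2 / e \<partial>M)"
  proof (rule integral_mono)
    show "integrable M (\<lambda>x. \<bar>(f x + g x) * (f x - g x)\<bar>)"
      using f g by (intro integrable_abs) (simp add: power2_eq_square algebra_simps)
    show "integrable M (\<lambda>x. 2 * e * ((f x)\<^sup>2 + (g x)\<^sup>2) + (f x - g x)\<^sup>2 / e)"
      using f g diff by simp
    fix x
    have "\<bar>(f x + g x) * (f x - g x)\<bar> \<le> e * (f x + g x)\<^sup>2 + (f x - g x)\<^sup>2 / e"
      by (rule abs_mult_le_weighted_squares[OF \<open>e > 0\<close>])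
    also have "e * (f x + g x)\<^sup>2 \<le> e * (2 * ((f x)\<^sup>2 + (g x)\<^sup>2))"
      using \<open>e > 0\<close> sum_sq by (intro mult_left_mono) auto
    finally show "\<bar>(f x + g x) * (f x - g x)\<bar> \<le> 2 * e * ((f x)\<^sup>2 + (g x)\<^sup>2) + (f x - g x)\<^sup>2 / e"
      by (simp add: algebra_simps)
  qed
  also have "\<dots> = 2 * e * ((\<integral>x. (f x)\<^sup>2 \<partial>M) + (\<integral>x. (g x)\<^sup>2 \<partial>M)) + (\<integral>x. (f x - g x)\<^sup>2 \<partial>M) / e"
    using f g diff by simp
  finally show ?thesis .
qed

section \<open>Weighted L^2 spaces\<close>

lemma L2w_sq_nonneg: "0 \<le> L2w_sq r f"
  unfolding L2w_sq_def by (intro integral_nonneg_AE) auto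

lemma Hs_sq_nonneg: "0 \<le> Hs_sq s f"
  unfolding Hs_sq_def by (intro integral_nonneg_AE) auto

lemma Fnorm_nonneg: "0 \<le> Fnorm s r f"
  using Hs_sq_nonneg[of s f] L2w_sq_nonneg[of r f] by (simp add: Fnorm_def)

lemma L2w_sq_le_Fnorm_sq: "L2w_sq r f \<le> (Fnorm s r f)\<^sup>2"
  using Hs_sq_nonneg[of s f] L2w_sq_nonneg[of r f] by (simp add: Fnorm_def)

lemma L2w_weighted_square:
  assumes f: "L2w r f" and w[measurable]: "w \<in> borel_measurable lborel"
    and w_le: "\<And>x. \<bar>w x\<bar> \<le> (1 + x\<^sup>2) powr r"
  shows "integrable lborel (\<lambda>x. w x * (f x)\<^sup>2)"
    and "(\<integral>x. \<bar>w x\<bar> * (f x)\<^sup>2 \<partial>lborel) \<le> L2w_sq r f"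
proof -
  have [measurable]: "f \<in> borel_measurable lborel"
    and weighted: "integrable lborel (\<lambda>x. (1 + x\<^sup>2) powr r * (f x)\<^sup>2)"
    using f by (auto simp: L2w_def)
  have pointwise: "\<bar>w x\<bar> * (f x)\<^sup>2 \<le> (1 + x\<^sup>2) powr r * (f x)\<^sup>2" for x
    using w_le by (intro mult_right_mono) auto
  show "integrable lborel (\<lambda>x. w x * (f x)\<^sup>2)"
    by (rule Bochner_Integration.integrable_bound[OF weighted]) (use pointwise in \<open>auto simp: abs_mult\<close>)
  then have "integrable lborel (\<lambda>x. \<bar>w x * (f x)\<^sup>2\<bar>)"
    by (rule integrable_abs)
  then have "integrable lborel (\<lambda>x. \<bar>w x\<bar> * (f x)\<^sup>2)"
    by (simp add: abs_mult)
  then show "(\<integral>x. \<bar>w x\<bar> * (f x)\<^sup>2 \<partial>lborel) \<le> L2w_sq r f"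
    unfolding L2w_sq_def using weighted pointwise by (intro integral_mono) auto
qed

lemma L2w_integrable_moment:
  assumes f: "L2w r f" and w[measurable]: "w \<in> borel_measurable lborel"
    and w_le: "\<And>x. (w x)\<^sup>2 \<le> (1 + x\<^sup>2) powr (r - 1)"
  shows "integrable lborel (\<lambda>x. w x * f x)"
proof -
  have [measurable]: "f \<in> borel_measurable lborel"
    and weighted: "integrable lborel (\<lambda>x. (1 + x\<^sup>2) powr r * (f x)\<^sup>2)"
    using f by (auto simp: L2w_def)
  have majorant: "integrable lborel (\<lambda>x. (1 + x\<^sup>2) powr r * (f x)\<^sup>2 + inverse (1 + x\<^sup>2))"
    using integrable_inverse_1_plus_square weighted
    by (auto simp: set_integrable_def einterval_def)
  have "\<bar>w x * f x\<bar> \<le> (1 + x\<^sup>2) powr r * (f x)\<^sup>2 + inverse (1 + x\<^sup>2)" for x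
  proof -
    have "0 < 1 + x\<^sup>2"
      by (simp add: add_pos_nonneg)
    then have pos: "0 < (1 + x\<^sup>2) powr r"
      by simp
    have "(w x)\<^sup>2 / (1 + x\<^sup>2) powr r \<le> (1 + x\<^sup>2) powr (r - 1) / (1 + x\<^sup>2) powr r"
      using w_le pos by (intro divide_right_mono) auto
    also have "\<dots> = inverse (1 + x\<^sup>2)"
      using \<open>0 < 1 + x\<^sup>2\<close> by (simp add: powr_diff divide_inverse)
    finally show ?thesis
      using abs_mult_le_weighted_squares[OF pos, of "f x" "w x"] by (simp add: mult.commute)
  qed
  then show ?thesis
    by (intro Bochner_Integration.integrable_bound[OF majorant]) (auto intro!: AE_I2 add_nonneg_nonneg)
qed

lemma L2w_3_moments:
  assumes "L2w 3 f"
  shows "integrable lborel f" "integrable lborel (\<lambda>x. x * f x)"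
    and "integrable lborel (\<lambda>x. x\<^sup>2 * f x)"
proof -
  have pow: "(1 + x\<^sup>2) powr 2 = (1 + x\<^sup>2)\<^sup>2" for x :: real
    by (simp add: powr_numeral add_pos_nonneg)
  have self_le: "1 + x\<^sup>2 \<le> (1 + x\<^sup>2)\<^sup>2" for x :: real
    using mult_right_mono[of 1 "1 + x\<^sup>2" "1 + x\<^sup>2"] by (simp add: power2_eq_square)
  have one_le: "1 \<le> (1 + x\<^sup>2) powr 2" and sq_le: "x\<^sup>2 \<le> (1 + x\<^sup>2) powr 2" for x :: real
    using self_le[of x] zero_le_power2[of x] unfolding pow by linarith+
  have sq_sq_le: "(x\<^sup>2)\<^sup>2 \<le> (1 + x\<^sup>2) powr 2" for x :: real
    unfolding pow by (intro power_mono) auto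
  show "integrable lborel f"
    using L2w_integrable_moment[OF assms, of "\<lambda>_. 1"] one_le by simp
  show "integrable lborel (\<lambda>x. x * f x)"
    using L2w_integrable_moment[OF assms, of "\<lambda>x. x"] sq_le by simp
  show "integrable lborel (\<lambda>x. x\<^sup>2 * f x)"
    using L2w_integrable_moment[OF assms, of "\<lambda>x. x\<^sup>2"] sq_sq_le by simp
qed

lemma L2w_3_square_moments:
  assumes "L2w 3 f"
  shows "integrable lborel (\<lambda>x. (f x)\<^sup>2)" "integrable lborel (\<lambda>x. x * (f x)\<^sup>2)"
    and "integrable lborel (\<lambda>x. x\<^sup>2 * (f x)\<^sup>2)"
    and "(\<integral>x. (f x)\<^sup>2 \<partial>lborel) \<le> L2w_sq 3 f" "(\<integral>x. \<bar>x * (f x)\<^sup>2\<bar> \<partial>lborel) \<le> L2w_sq 3 f"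
    and "(\<integral>x. \<bar>x\<^sup>2 * (f x)\<^sup>2\<bar> \<partial>lborel) \<le> L2w_sq 3 f"
proof -
  have le: "1 \<le> (1 + x\<^sup>2) powr 3" "\<bar>x\<bar> \<le> (1 + x\<^sup>2) powr 3" "x\<^sup>2 \<le> (1 + x\<^sup>2) powr 3" for x :: real
  proof -
    have "1 + x\<^sup>2 \<le> (1 + x\<^sup>2) powr 3"
      using powr_mono[of 1 3 "1 + x\<^sup>2"] by simp
    moreover have "\<bar>x\<bar> \<le> 1 + x\<^sup>2"
    proof (cases "\<bar>x\<bar> \<le> 1")
      case False
      then have "\<bar>x\<bar> * 1 \<le> \<bar>x\<bar> * \<bar>x\<bar>"
        by (intro mult_left_mono) auto
      then show ?thesis
        by (simp add: power2_eq_square)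
    qed (simp add: add_increasing2)
    ultimately show "1 \<le> (1 + x\<^sup>2) powr 3" "\<bar>x\<bar> \<le> (1 + x\<^sup>2) powr 3" "x\<^sup>2 \<le> (1 + x\<^sup>2) powr 3"
      by simp_all
  qed
  note one = L2w_weighted_square[OF assms, of "\<lambda>_. 1"]
    and lin = L2w_weighted_square[OF assms, of "\<lambda>x. x"]
    and quad = L2w_weighted_square[OF assms, of "\<lambda>x. x\<^sup>2"]
  show "integrable lborel (\<lambda>x. (f x)\<^sup>2)" "(\<integral>x. (f x)\<^sup>2 \<partial>lborel) \<le> L2w_sq 3 f"
    using one le by simp_all
  show "integrable lborel (\<lambda>x. x * (f x)\<^sup>2)" "(\<integral>x. \<bar>x * (f x)\<^sup>2\<bar> \<partial>lborel) \<le> L2w_sq 3 f"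
    using lin le by (simp_all add: abs_mult)
  show "integrable lborel (\<lambda>x. x\<^sup>2 * (f x)\<^sup>2)" "(\<integral>x. \<bar>x\<^sup>2 * (f x)\<^sup>2\<bar> \<partial>lborel) \<le> L2w_sq 3 f"
    using quad le by (simp_all add: abs_mult)
qed

lemma L2w_diff:
  assumes f: "L2w r f" and g: "L2w r g"
  shows "L2w r (\<lambda>x. f x - g x)"
    and "L2w_sq r f \<le> 2 * L2w_sq r (\<lambda>x. f x - g x) + 2 * L2w_sq r g"
proof -
  have [measurable]: "f \<in> borel_measurable lborel" "g \<in> borel_measurable lborel"
    and wf: "integrable lborel (\<lambda>x. (1 + x\<^sup>2) powr r * (f x)\<^sup>2)"
    and wg: "integrable lborel (\<lambda>x. (1 + x\<^sup>2) powr r * (g x)\<^sup>2)"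
    using f g by (auto simp: L2w_def)
  have sq_le: "(a - b)\<^sup>2 \<le> 2 * a\<^sup>2 + 2 * b\<^sup>2" for a b :: real
    using zero_le_power2[of "a + b"] by (simp add: power2_eq_square algebra_simps)
  have wd: "integrable lborel (\<lambda>x. (1 + x\<^sup>2) powr r * (f x - g x)\<^sup>2)"
  proof (rule Bochner_Integration.integrable_bound)
    show "integrable lborel (\<lambda>x. 2 * ((1 + x\<^sup>2) powr r * (f x)\<^sup>2) + 2 * ((1 + x\<^sup>2) powr r * (g x)\<^sup>2))"
      using wf wg by simp
    show "AE x in lborel. norm ((1 + x\<^sup>2) powr r * (f x - g x)\<^sup>2)
        \<le> norm (2 * ((1 + x\<^sup>2) powr r * (f x)\<^sup>2) + 2 * ((1 + x\<^sup>2) powr r * (g x)\<^sup>2))"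
    proof (rule AE_I2)
      fix x
      have "(1 + x\<^sup>2) powr r * (f x - g x)\<^sup>2 \<le> (1 + x\<^sup>2) powr r * (2 * (f x)\<^sup>2 + 2 * (g x)\<^sup>2)"
        by (intro mult_left_mono sq_le) simp
      then show "norm ((1 + x\<^sup>2) powr r * (f x - g x)\<^sup>2)
          \<le> norm (2 * ((1 + x\<^sup>2) powr r * (f x)\<^sup>2) + 2 * ((1 + x\<^sup>2) powr r * (g x)\<^sup>2))"
        by (simp add: algebra_simps)
    qed
  qed measurable
  then show "L2w r (\<lambda>x. f x - g x)"
    by (simp add: L2w_def)
  have "L2w_sq r f \<le> (\<integral>x. 2 * ((1 + x\<^sup>2) powr r * (f x - g x)\<^sup>2) + 2 * ((1 + x\<^sup>2) powr r * (g x)\<^sup>2) \<partial>lborel)"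
    unfolding L2w_sq_def
  proof (rule integral_mono[OF wf])
    show "integrable lborel (\<lambda>x. 2 * ((1 + x\<^sup>2) powr r * (f x - g x)\<^sup>2) + 2 * ((1 + x\<^sup>2) powr r * (g x)\<^sup>2))"
      using wd wg by simp
    show "(1 + x\<^sup>2) powr r * (f x)\<^sup>2 \<le> 2 * ((1 + x\<^sup>2) powr r * (f x - g x)\<^sup>2) + 2 * ((1 + x\<^sup>2) powr r * (g x)\<^sup>2)" for x
      using mult_left_mono[OF sq_le[of "f x - g x" "- g x"], of "(1 + x\<^sup>2) powr r"]
      by (simp add: algebra_simps)
  qed
  also have "\<dots> = 2 * L2w_sq r (\<lambda>x. f x - g x) + 2 * L2w_sq r g"
    unfolding L2w_sq_def using wd wg by simp
  finally show "L2w_sq r f \<le> 2 * L2w_sq r (\<lambda>x. f x - g x) + 2 * L2w_sq r g" .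
qed

section \<open>The Fourier transform near the origin\<close>

lemma FT_0: "FT f 0 = complex_of_real ((\<integral>x. f x \<partial>lborel) / sqrt (2 * pi))"
  by (simp add: FT_def integral_complex_of_real)

lemma norm_FT_integral_le:
  fixes g :: "real \<Rightarrow> complex"
  assumes "integrable lborel g" "integrable lborel h" "\<And>x. norm (g x) \<le> h x"
  shows "norm (complex_of_real (1 / sqrt (2 * pi)) * (\<integral>x. g x \<partial>lborel)) \<le> (\<integral>x. h x \<partial>lborel) / sqrt (2 * pi)"
  using Bochner_Integration.integral_norm_bound_integral[OF assms]
  by (simp add: norm_divide divide_right_mono)

definition sine_transform :: "(real \<Rightarrow> real) \<Rightarrow> real \<Rightarrow> real" where
  "sine_transform f \<xi> = (\<integral>x. f x * sin (x * \<xi>) \<partial>lborel)"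

definition FT_kernel :: "(real \<Rightarrow> real) \<Rightarrow> real \<Rightarrow> real \<Rightarrow> complex" where
  "FT_kernel f \<xi> x = complex_of_real (f x) * cis (- (x * \<xi>))"

lemma FT_eq_integral_FT_kernel: "FT f \<xi> = complex_of_real (1 / sqrt (2 * pi)) * (\<integral>x. FT_kernel f \<xi> x \<partial>lborel)"
  by (simp add: FT_def FT_kernel_def)

lemma borel_measurable_cis_linear [measurable]: "(\<lambda>x::real. cis (- (x * \<xi>))) \<in> borel_measurable borel"
  by (intro borel_measurable_continuous_onI continuous_intros)

context
  fixes f :: "real \<Rightarrow> real"
  assumes f: "integrable lborel f"
begin

lemma integrable_FT_kernel: "integrable lborel (FT_kernel f \<xi>)"
  unfolding FT_kernel_def using borel_measurable_integrable[OF f]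
  by (intro Bochner_Integration.integrable_bound[OF f]) (auto simp: norm_mult)

lemma norm_FT_le: "norm (FT f \<xi>) \<le> (\<integral>x. \<bar>f x\<bar> \<partial>lborel) / sqrt (2 * pi)"
  unfolding FT_eq_integral_FT_kernel
  by (rule norm_FT_integral_le[OF integrable_FT_kernel integrable_abs[OF f]]) (simp add: FT_kernel_def norm_mult)

lemma norm_FT_minus_FT_0_le:
  assumes "integrable lborel (\<lambda>x. x * f x)"
  shows "norm (FT f \<xi> - FT f 0) \<le> \<bar>\<xi>\<bar> * (\<integral>x. \<bar>x * f x\<bar> \<partial>lborel) / sqrt (2 * pi)"
proof -
  have "FT f \<xi> - FT f 0 = complex_of_real (1 / sqrt (2 * pi)) * (\<integral>x. FT_kernel f \<xi> x - FT_kernel f 0 x \<partial>lborel)"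
    using integrable_FT_kernel by (simp add: FT_eq_integral_FT_kernel Bochner_Integration.integral_diff right_diff_distrib)
  also have "norm \<dots> \<le> (\<integral>x. \<bar>\<xi>\<bar> * \<bar>x * f x\<bar> \<partial>lborel) / sqrt (2 * pi)"
  proof (rule norm_FT_integral_le)
    fix x
    have "FT_kernel f \<xi> x - FT_kernel f 0 x = complex_of_real (f x) * (cis (- (x * \<xi>)) - 1)"
      by (simp add: FT_kernel_def algebra_simps)
    then have "norm (FT_kernel f \<xi> x - FT_kernel f 0 x) = \<bar>f x\<bar> * cmod (cis (- (x * \<xi>)) - 1)"
      by (simp only: norm_mult norm_of_real)
    also have "\<dots> \<le> \<bar>f x\<bar> * \<bar>- (x * \<xi>)\<bar>"
      by (intro mult_left_mono norm_cis_minus_1_le) auto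
    finally show "norm (FT_kernel f \<xi> x - FT_kernel f 0 x) \<le> \<bar>\<xi>\<bar> * \<bar>x * f x\<bar>"
      by (simp add: abs_mult mult_ac)
  qed (use assms integrable_FT_kernel in auto)
  finally show ?thesis
    by simp
qed

lemma norm_FT_second_difference_le:
  assumes "integrable lborel (\<lambda>x. x\<^sup>2 * f x)"
  shows "norm (FT f \<xi> + FT f (- \<xi>) - 2 * FT f 0) \<le> \<xi>\<^sup>2 * (\<integral>x. \<bar>x\<^sup>2 * f x\<bar> \<partial>lborel) / sqrt (2 * pi)"
proof -
  have "FT f \<xi> + FT f (- \<xi>) - 2 * FT f 0
      = complex_of_real (1 / sqrt (2 * pi)) * (\<integral>x. FT_kernel f \<xi> x + FT_kernel f (- \<xi>) x - 2 * FT_kernel f 0 x \<partial>lborel)"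
    using integrable_FT_kernel by (simp add: FT_eq_integral_FT_kernel Bochner_Integration.integral_diff Bochner_Integration.integral_add algebra_simps)
  also have "norm \<dots> \<le> (\<integral>x. \<xi>\<^sup>2 * \<bar>x\<^sup>2 * f x\<bar> \<partial>lborel) / sqrt (2 * pi)"
  proof (rule norm_FT_integral_le)
    fix x
    have "FT_kernel f \<xi> x + FT_kernel f (- \<xi>) x - 2 * FT_kernel f 0 x
        = complex_of_real (f x) * (cis (- (x * \<xi>)) + cis (- (- (x * \<xi>))) - 2)"
      by (simp add: FT_kernel_def algebra_simps)
    then have "norm (FT_kernel f \<xi> x + FT_kernel f (- \<xi>) x - 2 * FT_kernel f 0 x)
        = \<bar>f x\<bar> * cmod (cis (- (x * \<xi>)) + cis (- (- (x * \<xi>))) - 2)"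
      by (simp only: norm_mult norm_of_real)
    also have "\<dots> \<le> \<bar>f x\<bar> * (- (x * \<xi>))\<^sup>2"
      by (intro mult_left_mono norm_cis_add_cis_uminus_minus_2_le) auto
    finally show "norm (FT_kernel f \<xi> x + FT_kernel f (- \<xi>) x - 2 * FT_kernel f 0 x) \<le> \<xi>\<^sup>2 * \<bar>x\<^sup>2 * f x\<bar>"
      by (simp add: abs_mult power_mult_distrib mult_ac)
  qed (use assms integrable_FT_kernel in auto)
  finally show ?thesis
    by simp
qed

lemma integrable_sine_kernel: "integrable lborel (\<lambda>x. f x * sin (x * \<xi>))"
  using borel_measurable_integrable[OF f]
  by (intro Bochner_Integration.integrable_bound[OF f]) (auto simp: abs_mult intro!: mult_left_le)

lemma FT_minus_FT_uminus:
  "FT f \<xi> - FT f (- \<xi>) = - 2 * \<i> * complex_of_real (sine_transform f \<xi> / sqrt (2 * pi))"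
proof -
  have "FT f \<xi> - FT f (- \<xi>) = complex_of_real (1 / sqrt (2 * pi)) * (\<integral>x. FT_kernel f \<xi> x - FT_kernel f (- \<xi>) x \<partial>lborel)"
    using integrable_FT_kernel by (simp add: FT_eq_integral_FT_kernel Bochner_Integration.integral_diff right_diff_distrib)
  also have "(\<integral>x. FT_kernel f \<xi> x - FT_kernel f (- \<xi>) x \<partial>lborel) = (\<integral>x. (- 2 * \<i>) * complex_of_real (f x * sin (x * \<xi>)) \<partial>lborel)"
    by (rule Bochner_Integration.integral_cong) (auto simp: FT_kernel_def cis.code complex_eq_iff)
  also have "\<dots> = - 2 * \<i> * complex_of_real (\<integral>x. f x * sin (x * \<xi>) \<partial>lborel)"
    by (simp only: integral_mult_right_zero integral_complex_of_real)
  finally show ?thesis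
    by (simp add: sine_transform_def)
qed

lemma tendsto_sine_transform_expansion:
  assumes moment1: "integrable lborel (\<lambda>x. x * f x)"
    and moment2: "integrable lborel (\<lambda>x. x\<^sup>2 * f x)"
  shows "((\<lambda>\<epsilon>. (sine_transform f \<epsilon> - \<epsilon> * (\<integral>x. x * f x \<partial>lborel)) / \<epsilon>\<^sup>2) \<longlongrightarrow> 0) (at 0)"
  unfolding tendsto_at_iff_sequentially comp_def sine_transform_def
proof (intro allI impI)
  fix e :: "nat \<Rightarrow> real"
  assume e_nz: "\<forall>n. e n \<in> UNIV - {0}" and e: "e \<longlonglongrightarrow> 0"
  define s where "s n x = f x * ((sin (x * e n) - x * e n) / (e n)\<^sup>2)" for n x
  have [measurable]: "f \<in> borel_measurable lborel"
    using f by (rule borel_measurable_integrable)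
  have norm_s: "norm (s n x) = \<bar>f x\<bar> * (\<bar>sin (x * e n) - x * e n\<bar> / (e n)\<^sup>2)" for n x
    by (simp add: s_def abs_mult)
  have sq: "\<bar>sin (x * e n) - x * e n\<bar> / (e n)\<^sup>2 \<le> x\<^sup>2 / 2"
    and cube: "\<bar>sin (x * e n) - x * e n\<bar> / (e n)\<^sup>2 \<le> \<bar>x\<bar> ^ 3 / 6 * \<bar>e n\<bar>" for n x
  proof -
    have e2: "0 < (e n)\<^sup>2"
      using e_nz by simp
    have e3: "\<bar>e n\<bar> ^ 3 = \<bar>e n\<bar> * (e n)\<^sup>2"
      by (simp add: power3_eq_cube power2_eq_square)
    show "\<bar>sin (x * e n) - x * e n\<bar> / (e n)\<^sup>2 \<le> x\<^sup>2 / 2"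
      using abs_sin_minus_self_le(1)[of "x * e n"] e2 by (simp add: pos_divide_le_eq power_mult_distrib)
    show "\<bar>sin (x * e n) - x * e n\<bar> / (e n)\<^sup>2 \<le> \<bar>x\<bar> ^ 3 / 6 * \<bar>e n\<bar>"
      using abs_sin_minus_self_le(2)[of "x * e n"] e2 e3
      by (simp add: pos_divide_le_eq power_mult_distrib abs_mult mult_ac)
  qed
  have bound: "AE x in lborel. norm (s n x) \<le> \<bar>x\<^sup>2 * f x\<bar> / 2" for n
  proof (rule AE_I2)
    fix x
    have "norm (s n x) \<le> \<bar>f x\<bar> * (x\<^sup>2 / 2)"
      unfolding norm_s by (rule mult_left_mono[OF sq abs_ge_zero])
    then show "norm (s n x) \<le> \<bar>x\<^sup>2 * f x\<bar> / 2"
      by (simp add: abs_mult mult_ac)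
  qed
  have lim: "AE x in lborel. (\<lambda>n. s n x) \<longlonglongrightarrow> 0"
  proof (rule AE_I2)
    fix x
    have "\<forall>n. norm (s n x) \<le> \<bar>f x\<bar> * (\<bar>x\<bar> ^ 3 / 6 * \<bar>e n\<bar>)"
      unfolding norm_s by (intro allI mult_left_mono[OF cube abs_ge_zero])
    moreover have "(\<lambda>n. \<bar>f x\<bar> * (\<bar>x\<bar> ^ 3 / 6 * \<bar>e n\<bar>)) \<longlonglongrightarrow> 0"
      by (intro tendsto_mult_right_zero tendsto_rabs_zero e)
    ultimately show "(\<lambda>n. s n x) \<longlonglongrightarrow> 0"
      by (rule Lim_null_comparison[OF always_eventually])
  qed
  have "(\<lambda>n. \<integral>x. s n x \<partial>lborel) \<longlonglongrightarrow> (\<integral>(x::real). 0 \<partial>lborel)"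
    by (rule Bochner_Integration.integral_dominated_convergence[OF _ _ _ lim bound])
      (use moment2 in \<open>auto simp: s_def\<close>)
  moreover have "(\<integral>x. s n x \<partial>lborel)
      = ((\<integral>x. f x * sin (x * e n) \<partial>lborel) - e n * (\<integral>x. x * f x \<partial>lborel)) / (e n)\<^sup>2" for n
  proof -
    have "s n = (\<lambda>x. (f x * sin (x * e n) - e n * (x * f x)) / (e n)\<^sup>2)"
      by (intro ext) (simp add: s_def right_diff_distrib mult_ac)
    then have "(\<integral>x. s n x \<partial>lborel) = (\<integral>x. f x * sin (x * e n) - e n * (x * f x) \<partial>lborel) / (e n)\<^sup>2"
      by simp
    then show ?thesis
      using integrable_sine_kernel integrable_mult_right[OF moment1] by simp
  qed
  ultimately show "(\<lambda>n. ((\<integral>x. f x * sin (x * e n) \<partial>lborel) - e n * (\<integral>x. x * f x \<partial>lborel)) / (e n)\<^sup>2) \<longlonglongrightarrow> 0"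
    by simp
qed

end

section \<open>The multiplier of the linear semigroup\<close>

definition semigroup_mult :: "real \<Rightarrow> real \<Rightarrow> real \<Rightarrow> real \<Rightarrow> complex" where
  "semigroup_mult \<beta> \<eta> s \<xi> = exp (sym \<beta> \<eta> \<xi> * complex_of_real s)"

lemma norm_sym_le:
  assumes "0 \<le> \<beta>" "0 \<le> \<eta>" "\<bar>\<xi>\<bar> \<le> 1"
  shows "norm (sym \<beta> \<eta> \<xi>) \<le> (\<beta> + 2 * \<eta>) * \<bar>\<xi>\<bar>"
proof -
  have sq_le: "\<xi>\<^sup>2 \<le> \<bar>\<xi>\<bar>"
    using assms(3) by (rule square_le_abs)
  have "norm (sym \<beta> \<eta> \<xi>)
      \<le> norm (\<i> * complex_of_real (\<beta> * \<xi> * \<bar>\<xi>\<bar>)) + norm (complex_of_real (\<eta> * (\<xi>\<^sup>2 - \<bar>\<xi>\<bar>)))"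
    unfolding sym_def by (rule norm_triangle_ineq4)
  also have "\<dots> = \<beta> * \<xi>\<^sup>2 + \<eta> * \<bar>\<xi>\<^sup>2 - \<bar>\<xi>\<bar>\<bar>"
    using assms(1,2) by (simp only: norm_mult norm_of_real) (simp add: abs_mult power2_eq_square)
  also have "\<dots> \<le> \<beta> * \<bar>\<xi>\<bar> + \<eta> * (\<bar>\<xi>\<bar> + \<bar>\<xi>\<bar>)"
  proof (rule add_mono)
    show "\<beta> * \<xi>\<^sup>2 \<le> \<beta> * \<bar>\<xi>\<bar>"
      using sq_le assms(1) by (rule mult_left_mono)
    have "\<bar>\<xi>\<^sup>2 - \<bar>\<xi>\<bar>\<bar> \<le> \<bar>\<xi>\<bar> + \<bar>\<xi>\<bar>"
      using sq_le zero_le_power2[of \<xi>] by linarith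
    then show "\<eta> * \<bar>\<xi>\<^sup>2 - \<bar>\<xi>\<bar>\<bar> \<le> \<eta> * (\<bar>\<xi>\<bar> + \<bar>\<xi>\<bar>)"
      using assms(2) by (rule mult_left_mono)
  qed
  finally show ?thesis
    by (simp add: algebra_simps)
qed

lemma norm_sym_minus_abs_le:
  assumes "0 \<le> \<beta>" "0 \<le> \<eta>"
  shows "norm (sym \<beta> \<eta> \<xi> - complex_of_real (\<eta> * \<bar>\<xi>\<bar>)) \<le> (\<beta> + \<eta>) * \<xi>\<^sup>2"
proof -
  have "sym \<beta> \<eta> \<xi> - complex_of_real (\<eta> * \<bar>\<xi>\<bar>)
      = \<i> * complex_of_real (\<beta> * \<xi> * \<bar>\<xi>\<bar>) - complex_of_real (\<eta> * \<xi>\<^sup>2)"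
    by (simp add: sym_def algebra_simps)
  also have "norm \<dots> \<le> norm (\<i> * complex_of_real (\<beta> * \<xi> * \<bar>\<xi>\<bar>)) + norm (complex_of_real (\<eta> * \<xi>\<^sup>2))"
    by (rule norm_triangle_ineq4)
  also have "\<dots> = (\<beta> + \<eta>) * \<xi>\<^sup>2"
    using assms by (simp only: norm_mult norm_of_real) (simp add: abs_mult power2_eq_square algebra_simps)
  finally show ?thesis .
qed

lemma semigroup_mult_expansion:
  assumes "0 \<le> \<beta>" "0 \<le> \<eta>" "0 \<le> s" "s \<le> T" "\<bar>\<xi>\<bar> \<le> 1" "T * (\<beta> + 2 * \<eta>) * \<bar>\<xi>\<bar> \<le> 1"
  shows "norm (semigroup_mult \<beta> \<eta> s \<xi> - 1 - complex_of_real (s * \<eta> * \<bar>\<xi>\<bar>))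
      \<le> (T\<^sup>2 * (\<beta> + 2 * \<eta>)\<^sup>2 + T * (\<beta> + \<eta>)) * \<xi>\<^sup>2"
proof -
  define z where "z = sym \<beta> \<eta> \<xi> * complex_of_real s"
  have "norm z = s * norm (sym \<beta> \<eta> \<xi>)"
    using assms(3) by (simp add: z_def norm_mult)
  also have "\<dots> \<le> T * ((\<beta> + 2 * \<eta>) * \<bar>\<xi>\<bar>)"
    using norm_sym_le[OF assms(1,2,5)] assms(3,4) by (intro mult_mono) auto
  finally have z: "norm z \<le> T * (\<beta> + 2 * \<eta>) * \<bar>\<xi>\<bar>"
    by (simp add: mult.assoc)
  then have "norm (exp z - 1 - z) \<le> (norm z)\<^sup>2"
    using assms(6) by (intro norm_exp_minus_1_minus_self_le) simp
  also have "\<dots> \<le> (T * (\<beta> + 2 * \<eta>) * \<bar>\<xi>\<bar>)\<^sup>2"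
    using z by (intro power_mono) auto
  finally have exp_bound: "norm (exp z - 1 - z) \<le> (T * (\<beta> + 2 * \<eta>) * \<bar>\<xi>\<bar>)\<^sup>2" .
  have "z - complex_of_real (s * \<eta> * \<bar>\<xi>\<bar>) = complex_of_real s * (sym \<beta> \<eta> \<xi> - complex_of_real (\<eta> * \<bar>\<xi>\<bar>))"
    by (simp add: z_def algebra_simps)
  then have "norm (z - complex_of_real (s * \<eta> * \<bar>\<xi>\<bar>)) = s * norm (sym \<beta> \<eta> \<xi> - complex_of_real (\<eta> * \<bar>\<xi>\<bar>))"
    using assms(3) by (simp only: norm_mult norm_of_real abs_of_nonneg)
  also have "\<dots> \<le> T * ((\<beta> + \<eta>) * \<xi>\<^sup>2)"
    using norm_sym_minus_abs_le[OF assms(1,2)] assms(3,4) by (intro mult_mono) auto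
  finally have linear_bound: "norm (z - complex_of_real (s * \<eta> * \<bar>\<xi>\<bar>)) \<le> T * ((\<beta> + \<eta>) * \<xi>\<^sup>2)" .
  have "norm (exp z - 1 - complex_of_real (s * \<eta> * \<bar>\<xi>\<bar>))
      \<le> (T * (\<beta> + 2 * \<eta>) * \<bar>\<xi>\<bar>)\<^sup>2 + T * ((\<beta> + \<eta>) * \<xi>\<^sup>2)"
    by (rule norm_diff_triangle_le[OF exp_bound linear_bound])
  also have "\<dots> = (T\<^sup>2 * (\<beta> + 2 * \<eta>)\<^sup>2 + T * (\<beta> + \<eta>)) * \<xi>\<^sup>2"
    by (simp only: power_mult_distrib power2_abs) (simp add: algebra_simps)
  finally show ?thesis
    by (simp add: semigroup_mult_def z_def)
qed

lemma semigroup_mult_expansion_near_0: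
  assumes "0 \<le> \<beta>" "0 \<le> \<eta>"
  obtains \<delta> K where "\<delta> > 0"
    and "\<And>s \<xi>. s \<in> {0..T} \<Longrightarrow> \<bar>\<xi>\<bar> \<le> \<delta> \<Longrightarrow>
          norm (semigroup_mult \<beta> \<eta> s \<xi> - 1 - complex_of_real (s * \<eta> * \<bar>\<xi>\<bar>)) \<le> K * \<xi>\<^sup>2"
proof
  define C where "C = \<bar>T\<bar> * (\<beta> + 2 * \<eta>)"
  have C: "0 \<le> C"
    using assms by (simp add: C_def)
  then show "1 / (1 + C) > 0"
    by simp
  fix s \<xi> assume s: "s \<in> {0..T}" and \<xi>: "\<bar>\<xi>\<bar> \<le> 1 / (1 + C)"
  have T: "0 \<le> T"
    using s by simp
  have "1 / (1 + C) \<le> 1"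
    using C by simp
  with \<xi> have "\<bar>\<xi>\<bar> \<le> 1"
    by linarith
  moreover have "C * \<bar>\<xi>\<bar> \<le> C * (1 / (1 + C))"
    using \<xi> C by (rule mult_left_mono)
  moreover have "C * (1 / (1 + C)) \<le> 1"
    using C by (simp add: divide_le_eq)
  ultimately show "norm (semigroup_mult \<beta> \<eta> s \<xi> - 1 - complex_of_real (s * \<eta> * \<bar>\<xi>\<bar>))
      \<le> (T\<^sup>2 * (\<beta> + 2 * \<eta>)\<^sup>2 + T * (\<beta> + \<eta>)) * \<xi>\<^sup>2"
    using assms s T by (intro semigroup_mult_expansion) (auto simp: C_def)
qed

lemma semigroup_mult_minus_1_near_0:
  assumes "0 \<le> \<beta>" "0 \<le> \<eta>"
  obtains \<delta> K where "\<delta> > 0"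
    and "\<And>s \<xi>. s \<in> {0..T} \<Longrightarrow> \<bar>\<xi>\<bar> \<le> \<delta> \<Longrightarrow> norm (semigroup_mult \<beta> \<eta> s \<xi> - 1) \<le> K * \<bar>\<xi>\<bar>"
proof -
  obtain \<delta> K where "\<delta> > 0"
    and expansion: "\<And>s \<xi>. s \<in> {0..T} \<Longrightarrow> \<bar>\<xi>\<bar> \<le> \<delta> \<Longrightarrow>
          norm (semigroup_mult \<beta> \<eta> s \<xi> - 1 - complex_of_real (s * \<eta> * \<bar>\<xi>\<bar>)) \<le> K * \<xi>\<^sup>2"
    using semigroup_mult_expansion_near_0[OF assms] by blast
  show ?thesis
  proof
    show "min \<delta> 1 > 0"
      using \<open>\<delta> > 0\<close> by simp
    fix s \<xi> assume s: "s \<in> {0..T}" and \<xi>: "\<bar>\<xi>\<bar> \<le> min \<delta> 1"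
    have "K * \<xi>\<^sup>2 \<le> \<bar>K\<bar> * \<xi>\<^sup>2"
      by (intro mult_right_mono) auto
    also have "\<dots> \<le> \<bar>K\<bar> * \<bar>\<xi>\<bar>"
      using square_le_abs[of \<xi>] \<xi> by (intro mult_left_mono) auto
    finally have "K * \<xi>\<^sup>2 \<le> \<bar>K\<bar> * \<bar>\<xi>\<bar>" .
    moreover have "norm (complex_of_real (s * \<eta> * \<bar>\<xi>\<bar>)) = s * \<eta> * \<bar>\<xi>\<bar>"
      using s assms by (simp only: norm_of_real) (simp add: abs_mult)
    moreover have "s * \<eta> * \<bar>\<xi>\<bar> \<le> \<bar>T\<bar> * \<eta> * \<bar>\<xi>\<bar>"
      using s assms by (intro mult_right_mono) auto
    moreover have "norm (semigroup_mult \<beta> \<eta> s \<xi> - 1)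
        \<le> norm (complex_of_real (s * \<eta> * \<bar>\<xi>\<bar>))
          + norm (semigroup_mult \<beta> \<eta> s \<xi> - 1 - complex_of_real (s * \<eta> * \<bar>\<xi>\<bar>))"
      by (rule norm_triangle_sub)
    moreover have "norm (semigroup_mult \<beta> \<eta> s \<xi> - 1 - complex_of_real (s * \<eta> * \<bar>\<xi>\<bar>)) \<le> K * \<xi>\<^sup>2"
      using \<xi> by (intro expansion[OF s]) simp
    ultimately have "norm (semigroup_mult \<beta> \<eta> s \<xi> - 1) \<le> \<bar>K\<bar> * \<bar>\<xi>\<bar> + \<bar>T\<bar> * \<eta> * \<bar>\<xi>\<bar>"
      by linarith
    then show "norm (semigroup_mult \<beta> \<eta> s \<xi> - 1) \<le> (\<bar>K\<bar> + \<bar>T\<bar> * \<eta>) * \<bar>\<xi>\<bar>"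
      by (simp add: algebra_simps)
  qed
qed

lemma semigroup_even_part_expansion:
  assumes "0 \<le> \<beta>" "0 \<le> \<eta>" "0 \<le> s"
    and f: "integrable lborel f" "integrable lborel (\<lambda>x. x\<^sup>2 * f x)"
  shows "\<exists>K. \<forall>\<^sub>F \<epsilon> in at_right 0.
    norm (semigroup_mult \<beta> \<eta> s \<epsilon> * FT f \<epsilon> + semigroup_mult \<beta> \<eta> s (- \<epsilon>) * FT f (- \<epsilon>)
      - 2 * (1 + complex_of_real (s * \<eta> * \<epsilon>)) * FT f 0) \<le> K * \<epsilon>\<^sup>2"
proof -
  obtain \<delta> K where "\<delta> > 0"
    and E: "\<And>\<xi>. \<bar>\<xi>\<bar> \<le> \<delta> \<Longrightarrow>
      norm (semigroup_mult \<beta> \<eta> s \<xi> - 1 - complex_of_real (s * \<eta> * \<bar>\<xi>\<bar>)) \<le> K * \<xi>\<^sup>2"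
    using semigroup_mult_expansion_near_0[OF assms(1,2), of s] assms(3) by (metis atLeastAtMost_iff order_refl)
  define X0 where "X0 = (\<integral>x. \<bar>f x\<bar> \<partial>lborel) / sqrt (2 * pi)"
  define X2 where "X2 = (\<integral>x. \<bar>x\<^sup>2 * f x\<bar> \<partial>lborel) / sqrt (2 * pi)"
  have B0: "norm (FT f \<xi>) \<le> X0" for \<xi>
    unfolding X0_def by (rule norm_FT_le[OF f(1)])
  have B2: "norm (FT f \<xi> + FT f (- \<xi>) - 2 * FT f 0) \<le> \<xi>\<^sup>2 * X2" for \<xi>
    using norm_FT_second_difference_le[OF f, of \<xi>] by (simp add: X2_def)
  have "norm (semigroup_mult \<beta> \<eta> s \<epsilon> * FT f \<epsilon> + semigroup_mult \<beta> \<eta> s (- \<epsilon>) * FT f (- \<epsilon>)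
      - 2 * (1 + complex_of_real (s * \<eta> * \<epsilon>)) * FT f 0) \<le> (2 * K * X0 + (1 + s * \<eta>) * X2) * \<epsilon>\<^sup>2"
    if \<epsilon>: "0 < \<epsilon>" "\<epsilon> < min \<delta> 1" for \<epsilon>
  proof -
    have E_p: "norm (semigroup_mult \<beta> \<eta> s \<epsilon> - 1 - complex_of_real (s * \<eta> * \<epsilon>)) \<le> K * \<epsilon>\<^sup>2"
      and E_m: "norm (semigroup_mult \<beta> \<eta> s (- \<epsilon>) - 1 - complex_of_real (s * \<eta> * \<epsilon>)) \<le> K * \<epsilon>\<^sup>2"
      using E[of \<epsilon>] E[of "- \<epsilon>"] \<epsilon> by simp_all
    have "0 \<le> K * \<epsilon>\<^sup>2"
      using E_p norm_ge_zero order_trans by blast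
    have "norm (1 + complex_of_real (s * \<eta> * \<epsilon>)) \<le> 1 + s * \<eta>"
      using assms \<epsilon> by (intro norm_1_plus_of_real_le) auto
    then have "norm (semigroup_mult \<beta> \<eta> s \<epsilon> * FT f \<epsilon> + semigroup_mult \<beta> \<eta> s (- \<epsilon>) * FT f (- \<epsilon>)
        - 2 * (1 + complex_of_real (s * \<eta> * \<epsilon>)) * FT f 0)
      \<le> (K * \<epsilon>\<^sup>2) * X0 + (K * \<epsilon>\<^sup>2) * X0 + (1 + s * \<eta>) * (\<epsilon>\<^sup>2 * X2)"
      using assms
      by (intro order_trans[OF norm_sum_products_expansion_le] add_mono mult_mono E_p E_m B0 B2
          \<open>0 \<le> K * \<epsilon>\<^sup>2\<close> norm_ge_zero) auto
    then show ?thesis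
      by (simp add: algebra_simps)
  qed
  then have "\<forall>\<^sub>F \<epsilon> in at_right 0.
    norm (semigroup_mult \<beta> \<eta> s \<epsilon> * FT f \<epsilon> + semigroup_mult \<beta> \<eta> s (- \<epsilon>) * FT f (- \<epsilon>)
      - 2 * (1 + complex_of_real (s * \<eta> * \<epsilon>)) * FT f 0) \<le> (2 * K * X0 + (1 + s * \<eta>) * X2) * \<epsilon>\<^sup>2"
    using \<open>\<delta> > 0\<close> by (intro eventually_at_rightI[where b = "min \<delta> 1"]) auto
  then show ?thesis
    by blast
qed

lemma semigroup_odd_part_expansion:
  assumes "0 \<le> \<beta>" "0 \<le> \<eta>" "0 \<le> s"
    and f: "integrable lborel f" "integrable lborel (\<lambda>x. x * f x)" and "FT f 0 = 0"
  shows "\<exists>K. \<forall>\<^sub>F \<epsilon> in at_right 0.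
    norm (semigroup_mult \<beta> \<eta> s \<epsilon> * FT f \<epsilon> - semigroup_mult \<beta> \<eta> s (- \<epsilon>) * FT f (- \<epsilon>)
      - (1 + complex_of_real (s * \<eta> * \<epsilon>)) * (FT f \<epsilon> - FT f (- \<epsilon>))) \<le> K * \<epsilon> ^ 3"
proof -
  obtain \<delta> K where "\<delta> > 0"
    and E: "\<And>\<xi>. \<bar>\<xi>\<bar> \<le> \<delta> \<Longrightarrow>
      norm (semigroup_mult \<beta> \<eta> s \<xi> - 1 - complex_of_real (s * \<eta> * \<bar>\<xi>\<bar>)) \<le> K * \<xi>\<^sup>2"
    using semigroup_mult_expansion_near_0[OF assms(1,2), of s] assms(3) by (metis atLeastAtMost_iff order_refl)
  define X1 where "X1 = (\<integral>x. \<bar>x * f x\<bar> \<partial>lborel) / sqrt (2 * pi)"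
  have B: "norm (FT f \<xi>) \<le> \<bar>\<xi>\<bar> * X1" for \<xi>
    using norm_FT_minus_FT_0_le[OF f, of \<xi>] assms(6) by (simp add: X1_def)
  have "norm (semigroup_mult \<beta> \<eta> s \<epsilon> * FT f \<epsilon> - semigroup_mult \<beta> \<eta> s (- \<epsilon>) * FT f (- \<epsilon>)
      - (1 + complex_of_real (s * \<eta> * \<epsilon>)) * (FT f \<epsilon> - FT f (- \<epsilon>))) \<le> (2 * K * X1) * \<epsilon> ^ 3"
    if \<epsilon>: "0 < \<epsilon>" "\<epsilon> < \<delta>" for \<epsilon>
  proof -
    have E_p: "norm (semigroup_mult \<beta> \<eta> s \<epsilon> - 1 - complex_of_real (s * \<eta> * \<epsilon>)) \<le> K * \<epsilon>\<^sup>2"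
      and E_m: "norm (semigroup_mult \<beta> \<eta> s (- \<epsilon>) - 1 - complex_of_real (s * \<eta> * \<epsilon>)) \<le> K * \<epsilon>\<^sup>2"
      using E[of \<epsilon>] E[of "- \<epsilon>"] \<epsilon> by simp_all
    have "0 \<le> K * \<epsilon>\<^sup>2"
      using E_p norm_ge_zero order_trans by blast
    have "norm (semigroup_mult \<beta> \<eta> s \<epsilon> * FT f \<epsilon> - semigroup_mult \<beta> \<eta> s (- \<epsilon>) * FT f (- \<epsilon>)
        - (1 + complex_of_real (s * \<eta> * \<epsilon>)) * (FT f \<epsilon> - FT f (- \<epsilon>)))
      \<le> (K * \<epsilon>\<^sup>2) * (\<bar>\<epsilon>\<bar> * X1) + (K * \<epsilon>\<^sup>2) * (\<bar>- \<epsilon>\<bar> * X1)"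
      by (intro order_trans[OF norm_diff_products_expansion_le] add_mono mult_mono E_p E_m B
          \<open>0 \<le> K * \<epsilon>\<^sup>2\<close> norm_ge_zero)
    then show ?thesis
      using \<epsilon> by (simp add: power2_eq_square power3_eq_cube algebra_simps)
  qed
  then have "\<forall>\<^sub>F \<epsilon> in at_right 0.
    norm (semigroup_mult \<beta> \<eta> s \<epsilon> * FT f \<epsilon> - semigroup_mult \<beta> \<eta> s (- \<epsilon>) * FT f (- \<epsilon>)
      - (1 + complex_of_real (s * \<eta> * \<epsilon>)) * (FT f \<epsilon> - FT f (- \<epsilon>))) \<le> (2 * K * X1) * \<epsilon> ^ 3"
    using \<open>\<delta> > 0\<close> by (intro eventually_at_rightI[where b = \<delta>]) auto
  then show ?thesis
    by blast
qed

section \<open>Mild solutions in F_{3,3}\<close>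

locale F33_solution =
  fixes \<beta> \<eta> T :: real and u :: "real \<Rightarrow> real \<Rightarrow> real"
  assumes \<beta>_pos: "\<beta> > 0" and \<eta>_pos: "\<eta> > 0" and T_pos: "T > 0"
    and mild: "mild_solution \<beta> \<eta> T u"
begin

lemma L2w_u: "t \<in> {0..T} \<Longrightarrow> L2w 3 (u t)"
  using mild by (auto simp: mild_solution_def inF_def)

lemma tendsto_Fnorm_u: "t \<in> {0..T} \<Longrightarrow> ((\<lambda>\<tau>. Fnorm 3 3 (\<lambda>x. u \<tau> x - u t x)) \<longlongrightarrow> 0) (at t within {0..T})"
  using mild by (auto simp: mild_solution_def)

definition duhamel_integrand :: "real \<Rightarrow> real \<Rightarrow> real \<Rightarrow> complex" where
  "duhamel_integrand t \<xi> \<tau> =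
     semigroup_mult \<beta> \<eta> (t - \<tau>) \<xi> * (\<i> * complex_of_real \<xi> / 2) * FT (\<lambda>x. (u \<tau> x)\<^sup>2) \<xi>"

definition duhamel :: "real \<Rightarrow> real \<Rightarrow> complex" where
  "duhamel t \<xi> = (LINT \<tau>:{0..t}|lborel. duhamel_integrand t \<xi> \<tau>)"

definition mild_identity_at :: "real \<Rightarrow> real \<Rightarrow> bool" where
  "mild_identity_at t \<xi> \<longleftrightarrow> set_integrable lborel {0..t} (duhamel_integrand t \<xi>) \<and>
     FT (u t) \<xi> = semigroup_mult \<beta> \<eta> t \<xi> * FT (u 0) \<xi> - duhamel t \<xi>"

lemma AE_mild_identity_at: "t \<in> {0..T} \<Longrightarrow> AE \<xi> in lborel. mild_identity_at t \<xi>"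
  using mild unfolding mild_solution_def mild_identity_at_def duhamel_def duhamel_integrand_def[abs_def]
    semigroup_mult_def by blast

lemma L2w_sq_locally_bounded:
  assumes t: "t \<in> {0..T}"
  shows "\<exists>d>0. \<forall>\<tau>\<in>{0..T}. dist \<tau> t < d \<longrightarrow> L2w_sq 3 (u \<tau>) \<le> 2 + 2 * L2w_sq 3 (u t)"
proof -
  obtain d where "d > 0"
    and d: "\<And>\<tau>. \<tau> \<in> {0..T} \<Longrightarrow> \<tau> \<noteq> t \<Longrightarrow> dist \<tau> t < d \<Longrightarrow> Fnorm 3 3 (\<lambda>x. u \<tau> x - u t x) < 1"
    using tendstoD[OF tendsto_Fnorm_u[OF t], of 1] Fnorm_nonneg by (auto simp: eventually_at)
  have "L2w_sq 3 (u \<tau>) \<le> 2 + 2 * L2w_sq 3 (u t)" if \<tau>: "\<tau> \<in> {0..T}" "dist \<tau> t < d" for \<tau>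
  proof (cases "\<tau> = t")
    case True
    then show ?thesis
      using L2w_sq_nonneg[of 3 "u t"] by simp
  next
    case False
    have "(Fnorm 3 3 (\<lambda>x. u \<tau> x - u t x))\<^sup>2 \<le> 1"
      using d[OF \<tau>(1) False \<tau>(2)] Fnorm_nonneg by (simp add: power_le_one)
    then have "L2w_sq 3 (\<lambda>x. u \<tau> x - u t x) \<le> 1"
      using L2w_sq_le_Fnorm_sq order_trans by blast
    then show ?thesis
      using L2w_diff(2)[OF L2w_u[OF \<tau>(1)] L2w_u[OF t]] by linarith
  qed
  with \<open>d > 0\<close> show ?thesis
    by (intro exI[of _ d]) auto
qed

lemma L2w_sq_bounded:
  obtains W where "0 \<le> W" and "\<And>\<tau>. \<tau> \<in> {0..T} \<Longrightarrow> L2w_sq 3 (u \<tau>) \<le> W"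
proof -
  obtain d where d: "\<forall>t\<in>{0..T}. d t > 0 \<and>
      (\<forall>\<tau>\<in>{0..T}. dist \<tau> t < d t \<longrightarrow> L2w_sq 3 (u \<tau>) \<le> 2 + 2 * L2w_sq 3 (u t))"
    using L2w_sq_locally_bounded by (metis (no_types, lifting) bchoice)
  have "{0..T} \<subseteq> (\<Union>t\<in>{0..T}. ball t (d t))"
  proof
    fix x assume "x \<in> {0..T}"
    then show "x \<in> (\<Union>t\<in>{0..T}. ball t (d t))"
      using d by (intro UN_I[of x]) auto
  qed
  then obtain C where C: "C \<subseteq> {0..T}" "finite C" "{0..T} \<subseteq> (\<Union>t\<in>C. ball t (d t))"
    by (rule compactE_image[OF compact_Icc open_ball])
  show ?thesis
  proof
    show "0 \<le> (\<Sum>t\<in>C. 2 + 2 * L2w_sq 3 (u t))"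
      by (intro sum_nonneg) (simp add: L2w_sq_nonneg)
    fix \<tau> assume \<tau>: "\<tau> \<in> {0..T}"
    then obtain t where t: "t \<in> C" "\<tau> \<in> ball t (d t)"
      using C(3) by blast
    then have "L2w_sq 3 (u \<tau>) \<le> 2 + 2 * L2w_sq 3 (u t)"
      using d C(1) \<tau> by (auto simp: dist_commute)
    also have "\<dots> \<le> (\<Sum>t\<in>C. 2 + 2 * L2w_sq 3 (u t))"
      by (rule member_le_sum[OF t(1) _ C(2)]) (simp add: L2w_sq_nonneg)
    finally show "L2w_sq 3 (u \<tau>) \<le> (\<Sum>t\<in>C. 2 + 2 * L2w_sq 3 (u t))" .
  qed
qed

definition energy :: "real \<Rightarrow> real" where
  "energy \<tau> = (\<integral>x. (u \<tau> x)\<^sup>2 \<partial>lborel)"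

lemma energy_nonneg: "0 \<le> energy \<tau>"
  unfolding energy_def by (intro integral_nonneg_AE) auto

lemma energy_le_L2w_sq: "\<tau> \<in> {0..T} \<Longrightarrow> energy \<tau> \<le> L2w_sq 3 (u \<tau>)"
  unfolding energy_def by (rule L2w_3_square_moments(4)[OF L2w_u])

lemma abs_energy_diff_le:
  assumes W: "\<And>\<tau>. \<tau> \<in> {0..T} \<Longrightarrow> L2w_sq 3 (u \<tau>) \<le> W" and \<tau>: "\<tau> \<in> {0..T}" and t: "t \<in> {0..T}"
  shows "\<bar>energy \<tau> - energy t\<bar> \<le> (4 * W + 1) * Fnorm 3 3 (\<lambda>x. u \<tau> x - u t x)"
proof -
  define F where "F = Fnorm 3 3 (\<lambda>x. u \<tau> x - u t x)"
  define D where "D = (\<integral>x. (u \<tau> x - u t x)\<^sup>2 \<partial>lborel)"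
  note L = L2w_u[OF \<tau>] L2w_u[OF t]
  note [measurable] = L[unfolded L2w_def, THEN conjunct1]
  have D_le: "D \<le> F\<^sup>2"
    using L2w_3_square_moments(4)[OF L2w_diff(1)[OF L]] L2w_sq_le_Fnorm_sq
    unfolding D_def F_def by (rule order_trans)
  show ?thesis
  proof (cases "F = 0")
    case True
    have "integrable lborel (\<lambda>x. (u \<tau> x - u t x)\<^sup>2)"
      by (rule L2w_3_square_moments(1)[OF L2w_diff(1)[OF L]])
    moreover have "D = 0"
      using D_le True by (simp add: D_def antisym integral_nonneg_AE)
    ultimately have "AE x in lborel. (u \<tau> x - u t x)\<^sup>2 = 0"
      by (simp add: D_def integral_nonneg_eq_0_iff_AE)
    then have "energy \<tau> = energy t"
      unfolding energy_def by (intro integral_cong_AE) auto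
    then show ?thesis
      using True by (simp add: F_def)
  next
    case False
    then have F: "F > 0"
      using Fnorm_nonneg[of 3 3] by (simp add: F_def order_less_le)
    have sum_le: "energy \<tau> + energy t \<le> 2 * W"
      using energy_le_L2w_sq[OF \<tau>] energy_le_L2w_sq[OF t] W[OF \<tau>] W[OF t] by linarith
    have "\<bar>energy \<tau> - energy t\<bar> \<le> 2 * F * (energy \<tau> + energy t) + D / F"
      unfolding energy_def D_def
      by (rule abs_integral_square_diff_le[OF _ _ L2w_3_square_moments(1)[OF L(1)]
            L2w_3_square_moments(1)[OF L(2)] F]) measurable
    also have "\<dots> \<le> 2 * F * (2 * W) + F"
      using sum_le D_le F by (intro add_mono mult_left_mono) (auto simp: divide_le_eq power2_eq_square)
    finally show ?thesis
      by (simp add: F_def algebra_simps)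
  qed
qed

lemma continuous_on_energy: "continuous_on {0..T} energy"
proof -
  obtain W where W: "\<And>\<tau>. \<tau> \<in> {0..T} \<Longrightarrow> L2w_sq 3 (u \<tau>) \<le> W"
    using L2w_sq_bounded by blast
  have "(energy \<longlongrightarrow> energy t) (at t within {0..T})" if t: "t \<in> {0..T}" for t
  proof -
    have "((\<lambda>\<tau>. (4 * W + 1) * Fnorm 3 3 (\<lambda>x. u \<tau> x - u t x)) \<longlongrightarrow> 0) (at t within {0..T})"
      by (rule tendsto_mult_right_zero[OF tendsto_Fnorm_u[OF t]])
    moreover have "\<forall>\<^sub>F \<tau> in at t within {0..T}. norm (energy \<tau> - energy t) \<le> (4 * W + 1) * Fnorm 3 3 (\<lambda>x. u \<tau> x - u t x)"
      using abs_energy_diff_le[OF W _ t] by (auto simp: eventually_at_filter)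
    ultimately have "((\<lambda>\<tau>. energy \<tau> - energy t) \<longlongrightarrow> 0) (at t within {0..T})"
      by (rule Lim_null_comparison[rotated])
    then show ?thesis
      by (simp add: LIM_zero_iff)
  qed
  then show ?thesis
    by (simp add: continuous_on_def)
qed

abbreviation FT_sq :: "real \<Rightarrow> real \<Rightarrow> complex" where
  "FT_sq \<tau> \<equiv> FT (\<lambda>x. (u \<tau> x)\<^sup>2)"

lemma FT_sq_0: "FT_sq \<tau> 0 = complex_of_real (energy \<tau> / sqrt (2 * pi))"
  by (simp add: FT_0 energy_def)

lemma FT_sq_bounds:
  obtains M where "0 \<le> M"
    and "\<And>\<tau> \<xi>. \<tau> \<in> {0..T} \<Longrightarrow> norm (FT_sq \<tau> \<xi>) \<le> M"
    and "\<And>\<tau> \<xi>. \<tau> \<in> {0..T} \<Longrightarrow> norm (FT_sq \<tau> \<xi> - FT_sq \<tau> 0) \<le> M * \<bar>\<xi>\<bar>"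
    and "\<And>\<tau> \<xi>. \<tau> \<in> {0..T} \<Longrightarrow> norm (FT_sq \<tau> \<xi> + FT_sq \<tau> (- \<xi>) - 2 * FT_sq \<tau> 0) \<le> M * \<xi>\<^sup>2"
proof -
  obtain W where W0: "0 \<le> W" and W: "\<And>\<tau>. \<tau> \<in> {0..T} \<Longrightarrow> L2w_sq 3 (u \<tau>) \<le> W"
    using L2w_sq_bounded by blast
  show ?thesis
  proof (rule that[of "W / sqrt (2 * pi)"])
    show "0 \<le> W / sqrt (2 * pi)"
      using W0 by simp
  next
    fix \<tau> \<xi> assume \<tau>: "\<tau> \<in> {0..T}"
    note sq = L2w_3_square_moments[OF L2w_u[OF \<tau>]]
    have "norm (FT_sq \<tau> \<xi>) \<le> (\<integral>x. \<bar>(u \<tau> x)\<^sup>2\<bar> \<partial>lborel) / sqrt (2 * pi)"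
      by (rule norm_FT_le[OF sq(1)])
    also have "\<dots> \<le> W / sqrt (2 * pi)"
      using sq(4) W[OF \<tau>] by (intro divide_right_mono) auto
    finally show "norm (FT_sq \<tau> \<xi>) \<le> W / sqrt (2 * pi)" .
    have "norm (FT_sq \<tau> \<xi> - FT_sq \<tau> 0) \<le> \<bar>\<xi>\<bar> * (\<integral>x. \<bar>x * (u \<tau> x)\<^sup>2\<bar> \<partial>lborel) / sqrt (2 * pi)"
      by (rule norm_FT_minus_FT_0_le[OF sq(1) sq(2)])
    also have "\<dots> \<le> \<bar>\<xi>\<bar> * W / sqrt (2 * pi)"
      using sq(5) W[OF \<tau>] by (intro divide_right_mono mult_left_mono) auto
    finally show "norm (FT_sq \<tau> \<xi> - FT_sq \<tau> 0) \<le> W / sqrt (2 * pi) * \<bar>\<xi>\<bar>"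
      by (simp add: mult.commute)
    have "norm (FT_sq \<tau> \<xi> + FT_sq \<tau> (- \<xi>) - 2 * FT_sq \<tau> 0)
        \<le> \<xi>\<^sup>2 * (\<integral>x. \<bar>x\<^sup>2 * (u \<tau> x)\<^sup>2\<bar> \<partial>lborel) / sqrt (2 * pi)"
      by (rule norm_FT_second_difference_le[OF sq(1) sq(3)])
    also have "\<dots> \<le> \<xi>\<^sup>2 * W / sqrt (2 * pi)"
      using sq(6) W[OF \<tau>] by (intro divide_right_mono mult_left_mono) auto
    finally show "norm (FT_sq \<tau> \<xi> + FT_sq \<tau> (- \<xi>) - 2 * FT_sq \<tau> 0) \<le> W / sqrt (2 * pi) * \<xi>\<^sup>2"
      by (simp add: mult.commute)
  qed
qed

lemma duhamel_integrand_even_part: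
  "duhamel_integrand t \<xi> \<tau> + duhamel_integrand t (- \<xi>) \<tau>
    = \<i> * complex_of_real \<xi> / 2 * (semigroup_mult \<beta> \<eta> (t - \<tau>) \<xi> * FT_sq \<tau> \<xi>
        - semigroup_mult \<beta> \<eta> (t - \<tau>) (- \<xi>) * FT_sq \<tau> (- \<xi>))"
  by (simp add: duhamel_integrand_def algebra_simps)

lemma duhamel_integrand_odd_part:
  "duhamel_integrand t \<xi> \<tau> - duhamel_integrand t (- \<xi>) \<tau>
    = \<i> * complex_of_real \<xi> / 2 * (semigroup_mult \<beta> \<eta> (t - \<tau>) \<xi> * FT_sq \<tau> \<xi>
        + semigroup_mult \<beta> \<eta> (t - \<tau>) (- \<xi>) * FT_sq \<tau> (- \<xi>))"
  by (simp add: duhamel_integrand_def algebra_simps)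

lemma norm_duhamel_integrand_even_part_le:
  assumes "0 < \<epsilon>" "0 \<le> a"
    and "norm (semigroup_mult \<beta> \<eta> (t - \<tau>) \<epsilon> - 1) \<le> a"
    and "norm (semigroup_mult \<beta> \<eta> (t - \<tau>) (- \<epsilon>) - 1) \<le> a"
    and "norm (FT_sq \<tau> \<epsilon>) \<le> M" "norm (FT_sq \<tau> (- \<epsilon>)) \<le> M"
    and "norm (FT_sq \<tau> \<epsilon> - FT_sq \<tau> 0) \<le> b" "norm (FT_sq \<tau> (- \<epsilon>) - FT_sq \<tau> 0) \<le> b"
  shows "norm (duhamel_integrand t \<epsilon> \<tau> + duhamel_integrand t (- \<epsilon>) \<tau>) \<le> \<epsilon> * (a * M + b)"
proof -
  have "norm (semigroup_mult \<beta> \<eta> (t - \<tau>) \<epsilon> * FT_sq \<tau> \<epsilon> - semigroup_mult \<beta> \<eta> (t - \<tau>) (- \<epsilon>) * FT_sq \<tau> (- \<epsilon>))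
      \<le> a * M + a * M + b + b"
    using assms(2-8)
    by (intro order_trans[OF norm_diff_products_le[where z = "FT_sq \<tau> 0"]] add_mono mult_mono) auto
  then have "\<epsilon> / 2 * norm (semigroup_mult \<beta> \<eta> (t - \<tau>) \<epsilon> * FT_sq \<tau> \<epsilon>
      - semigroup_mult \<beta> \<eta> (t - \<tau>) (- \<epsilon>) * FT_sq \<tau> (- \<epsilon>)) \<le> \<epsilon> / 2 * (a * M + a * M + b + b)"
    using assms(1) by (intro mult_left_mono) auto
  then show ?thesis
    unfolding duhamel_integrand_even_part norm_ii_half_mult using assms(1) by (simp add: algebra_simps)
qed

lemma norm_duhamel_integrand_odd_part_le:
  assumes "0 < \<epsilon>" "0 \<le> a"
    and "norm (semigroup_mult \<beta> \<eta> (t - \<tau>) \<epsilon> - 1 - w) \<le> a"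
    and "norm (semigroup_mult \<beta> \<eta> (t - \<tau>) (- \<epsilon>) - 1 - w) \<le> a"
    and "norm (FT_sq \<tau> \<epsilon>) \<le> M" "norm (FT_sq \<tau> (- \<epsilon>)) \<le> M"
    and "norm (FT_sq \<tau> \<epsilon> + FT_sq \<tau> (- \<epsilon>) - 2 * FT_sq \<tau> 0) \<le> b"
  shows "norm (duhamel_integrand t \<epsilon> \<tau> - duhamel_integrand t (- \<epsilon>) \<tau> - \<i> * complex_of_real \<epsilon> * (1 + w) * FT_sq \<tau> 0)
    \<le> \<epsilon> / 2 * (2 * a * M + norm (1 + w) * b)"
proof -
  have "norm (semigroup_mult \<beta> \<eta> (t - \<tau>) \<epsilon> * FT_sq \<tau> \<epsilon> + semigroup_mult \<beta> \<eta> (t - \<tau>) (- \<epsilon>) * FT_sq \<tau> (- \<epsilon>)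
      - 2 * (1 + w) * FT_sq \<tau> 0) \<le> a * M + a * M + norm (1 + w) * b"
    using assms(2-7)
    by (intro order_trans[OF norm_sum_products_expansion_le] add_mono mult_mono mult_left_mono) auto
  then have "\<epsilon> / 2 * norm (semigroup_mult \<beta> \<eta> (t - \<tau>) \<epsilon> * FT_sq \<tau> \<epsilon>
      + semigroup_mult \<beta> \<eta> (t - \<tau>) (- \<epsilon>) * FT_sq \<tau> (- \<epsilon>) - 2 * (1 + w) * FT_sq \<tau> 0)
      \<le> \<epsilon> / 2 * (a * M + a * M + norm (1 + w) * b)"
    using assms(1) by (intro mult_left_mono) auto
  moreover have "duhamel_integrand t \<epsilon> \<tau> - duhamel_integrand t (- \<epsilon>) \<tau> - \<i> * complex_of_real \<epsilon> * (1 + w) * FT_sq \<tau> 0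
      = \<i> * complex_of_real \<epsilon> / 2 * (semigroup_mult \<beta> \<eta> (t - \<tau>) \<epsilon> * FT_sq \<tau> \<epsilon>
        + semigroup_mult \<beta> \<eta> (t - \<tau>) (- \<epsilon>) * FT_sq \<tau> (- \<epsilon>) - 2 * (1 + w) * FT_sq \<tau> 0)"
    by (simp add: duhamel_integrand_odd_part algebra_simps)
  ultimately show ?thesis
    using assms(1) by (simp only: norm_ii_half_mult) (simp add: algebra_simps)
qed

lemma duhamel_even_part_bound:
  assumes t: "t \<in> {0..T}"
  shows "\<exists>K. \<forall>\<^sub>F \<epsilon> in at_right 0.
    set_integrable lborel {0..t} (duhamel_integrand t \<epsilon>) \<longrightarrow>
    set_integrable lborel {0..t} (duhamel_integrand t (- \<epsilon>)) \<longrightarrow>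
    norm (duhamel t \<epsilon> + duhamel t (- \<epsilon>)) \<le> K * \<epsilon>\<^sup>2"
proof -
  obtain \<delta> K where "\<delta> > 0"
    and E: "\<And>s \<xi>. s \<in> {0..T} \<Longrightarrow> \<bar>\<xi>\<bar> \<le> \<delta> \<Longrightarrow> norm (semigroup_mult \<beta> \<eta> s \<xi> - 1) \<le> K * \<bar>\<xi>\<bar>"
    using semigroup_mult_minus_1_near_0 \<beta>_pos \<eta>_pos by (metis less_imp_le)
  obtain M where C: "\<And>\<tau> \<xi>. \<tau> \<in> {0..T} \<Longrightarrow> norm (FT_sq \<tau> \<xi>) \<le> M"
    and C1: "\<And>\<tau> \<xi>. \<tau> \<in> {0..T} \<Longrightarrow> norm (FT_sq \<tau> \<xi> - FT_sq \<tau> 0) \<le> M * \<bar>\<xi>\<bar>"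
    using FT_sq_bounds by metis
  have "\<forall>\<^sub>F \<epsilon> in at_right 0.
    set_integrable lborel {0..t} (duhamel_integrand t \<epsilon>) \<longrightarrow>
    set_integrable lborel {0..t} (duhamel_integrand t (- \<epsilon>)) \<longrightarrow>
    norm (duhamel t \<epsilon> + duhamel t (- \<epsilon>)) \<le> ((K * M + M) * t) * \<epsilon>\<^sup>2"
  proof (rule eventually_at_rightI[OF _ \<open>\<delta> > 0\<close>], intro impI)
    fix \<epsilon> assume \<epsilon>: "\<epsilon> \<in> {0<..<\<delta>}"
      and int_p: "set_integrable lborel {0..t} (duhamel_integrand t \<epsilon>)"
      and int_m: "set_integrable lborel {0..t} (duhamel_integrand t (- \<epsilon>))"
    have "norm (duhamel_integrand t \<epsilon> \<tau> + duhamel_integrand t (- \<epsilon>) \<tau>) \<le> \<epsilon> * ((K * \<epsilon>) * M + M * \<epsilon>)"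
      if "\<tau> \<in> {0..t}" for \<tau>
    proof -
      have s: "t - \<tau> \<in> {0..T}" and \<tau>: "\<tau> \<in> {0..T}"
        using that t by auto
      have "norm (semigroup_mult \<beta> \<eta> (t - \<tau>) \<epsilon> - 1) \<le> K * \<epsilon>"
        using E[OF s, of \<epsilon>] \<epsilon> by simp
      moreover have "norm (semigroup_mult \<beta> \<eta> (t - \<tau>) (- \<epsilon>) - 1) \<le> K * \<epsilon>"
        using E[OF s, of "- \<epsilon>"] \<epsilon> by simp
      ultimately show ?thesis
        using \<epsilon> C1[OF \<tau>, of \<epsilon>] C1[OF \<tau>, of "- \<epsilon>"]
        by (intro norm_duhamel_integrand_even_part_le C[OF \<tau>]) (auto intro: order_trans[OF norm_ge_zero])
    qed
    then have "norm (LINT \<tau>:{0..t}|lborel. duhamel_integrand t \<epsilon> \<tau> + duhamel_integrand t (- \<epsilon>) \<tau>)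
        \<le> \<epsilon> * ((K * \<epsilon>) * M + M * \<epsilon>) * (t - 0)"
      using t by (intro norm_set_integral_Icc_le[OF set_integral_add(1)[OF int_p int_m]]) auto
    then show "norm (duhamel t \<epsilon> + duhamel t (- \<epsilon>)) \<le> ((K * M + M) * t) * \<epsilon>\<^sup>2"
      by (simp add: duhamel_def set_integral_add(2)[OF int_p int_m] power2_eq_square algebra_simps)
  qed
  then show ?thesis
    by blast
qed

lemma duhamel_odd_part_expansion:
  assumes t: "t \<in> {0..T}"
  shows "\<exists>K. \<forall>\<^sub>F \<epsilon> in at_right 0.
    set_integrable lborel {0..t} (duhamel_integrand t \<epsilon>) \<longrightarrow>
    set_integrable lborel {0..t} (duhamel_integrand t (- \<epsilon>)) \<longrightarrow>
    norm (duhamel t \<epsilon> - duhamel t (- \<epsilon>) - \<i> * complex_of_real (\<epsilon> / sqrt (2 * pi)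
      * (LINT \<tau>:{0..t}|lborel. (1 + (t - \<tau>) * \<eta> * \<epsilon>) * energy \<tau>))) \<le> K * \<epsilon> ^ 3"
proof -
  obtain \<delta> K where "\<delta> > 0"
    and E: "\<And>s \<xi>. s \<in> {0..T} \<Longrightarrow> \<bar>\<xi>\<bar> \<le> \<delta> \<Longrightarrow>
      norm (semigroup_mult \<beta> \<eta> s \<xi> - 1 - complex_of_real (s * \<eta> * \<bar>\<xi>\<bar>)) \<le> K * \<xi>\<^sup>2"
    using semigroup_mult_expansion_near_0 \<beta>_pos \<eta>_pos by (metis less_imp_le)
  obtain M where "0 \<le> M" and C: "\<And>\<tau> \<xi>. \<tau> \<in> {0..T} \<Longrightarrow> norm (FT_sq \<tau> \<xi>) \<le> M"
    and C2: "\<And>\<tau> \<xi>. \<tau> \<in> {0..T} \<Longrightarrow> norm (FT_sq \<tau> \<xi> + FT_sq \<tau> (- \<xi>) - 2 * FT_sq \<tau> 0) \<le> M * \<xi>\<^sup>2"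
    using FT_sq_bounds by metis
  define h where "h \<epsilon> \<tau> = \<i> * complex_of_real \<epsilon> * (1 + complex_of_real ((t - \<tau>) * \<eta> * \<epsilon>)) * FT_sq \<tau> 0"
    for \<epsilon> \<tau>
  have h_eq: "h \<epsilon> = (\<lambda>\<tau>. \<i> * complex_of_real (\<epsilon> / sqrt (2 * pi))
      * complex_of_real ((1 + (t - \<tau>) * \<eta> * \<epsilon>) * energy \<tau>))" for \<epsilon>
    by (auto simp: h_def FT_sq_0)
  have h_int: "set_integrable lborel {0..t} (h \<epsilon>)" for \<epsilon>
    unfolding set_integrable_def h_eq using t
    by (intro borel_integrable_compact continuous_intros continuous_on_subset[OF continuous_on_energy]) auto
  have h_integral: "(LINT \<tau>:{0..t}|lborel. h \<epsilon> \<tau>) = \<i> * complex_of_real (\<epsilon> / sqrt (2 * pi)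
      * (LINT \<tau>:{0..t}|lborel. (1 + (t - \<tau>) * \<eta> * \<epsilon>) * energy \<tau>))" for \<epsilon>
    by (simp only: h_eq set_integral_mult_right set_integral_complex_of_real) simp
  define B where "B = (2 * K * M + (1 + t * \<eta>) * M) / 2"
  have "\<forall>\<^sub>F \<epsilon> in at_right 0.
    set_integrable lborel {0..t} (duhamel_integrand t \<epsilon>) \<longrightarrow>
    set_integrable lborel {0..t} (duhamel_integrand t (- \<epsilon>)) \<longrightarrow>
    norm (duhamel t \<epsilon> - duhamel t (- \<epsilon>) - \<i> * complex_of_real (\<epsilon> / sqrt (2 * pi)
      * (LINT \<tau>:{0..t}|lborel. (1 + (t - \<tau>) * \<eta> * \<epsilon>) * energy \<tau>))) \<le> (B * t) * \<epsilon> ^ 3"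
  proof (rule eventually_at_rightI[where b = "min \<delta> 1"], intro impI)
    fix \<epsilon> assume \<epsilon>: "\<epsilon> \<in> {0<..<min \<delta> 1}"
      and int_p: "set_integrable lborel {0..t} (duhamel_integrand t \<epsilon>)"
      and int_m: "set_integrable lborel {0..t} (duhamel_integrand t (- \<epsilon>))"
    have "norm (duhamel_integrand t \<epsilon> \<tau> - duhamel_integrand t (- \<epsilon>) \<tau> - h \<epsilon> \<tau>) \<le> B * \<epsilon> ^ 3"
      if "\<tau> \<in> {0..t}" for \<tau>
    proof -
      have s: "t - \<tau> \<in> {0..T}" and \<tau>: "\<tau> \<in> {0..T}"
        using that t by auto
      define w where "w = complex_of_real ((t - \<tau>) * \<eta> * \<epsilon>)"
      have E_p: "norm (semigroup_mult \<beta> \<eta> (t - \<tau>) \<epsilon> - 1 - w) \<le> K * \<epsilon>\<^sup>2"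
        and E_m: "norm (semigroup_mult \<beta> \<eta> (t - \<tau>) (- \<epsilon>) - 1 - w) \<le> K * \<epsilon>\<^sup>2"
        using E[OF s, of \<epsilon>] E[OF s, of "- \<epsilon>"] \<epsilon> by (simp_all add: w_def)
      have "norm (1 + w) \<le> 1 + t * \<eta>"
        unfolding w_def using that \<epsilon> \<eta>_pos by (intro norm_1_plus_of_real_le) auto
      then have w_le: "norm (1 + w) * (M * \<epsilon>\<^sup>2) \<le> (1 + t * \<eta>) * (M * \<epsilon>\<^sup>2)"
        using \<open>0 \<le> M\<close> by (intro mult_right_mono) auto
      have "norm (duhamel_integrand t \<epsilon> \<tau> - duhamel_integrand t (- \<epsilon>) \<tau> - h \<epsilon> \<tau>)
          \<le> \<epsilon> / 2 * (2 * (K * \<epsilon>\<^sup>2) * M + norm (1 + w) * (M * \<epsilon>\<^sup>2))"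
        unfolding h_def w_def[symmetric] using \<epsilon> E_p E_m C[OF \<tau>] C2[OF \<tau>]
        by (intro norm_duhamel_integrand_odd_part_le) (auto intro: order_trans[OF norm_ge_zero])
      also have "\<dots> \<le> \<epsilon> / 2 * (2 * (K * \<epsilon>\<^sup>2) * M + (1 + t * \<eta>) * (M * \<epsilon>\<^sup>2))"
        using w_le \<epsilon> by (intro mult_left_mono add_left_mono) auto
      also have "\<dots> = B * \<epsilon> ^ 3"
        by (simp add: B_def power2_eq_square power3_eq_cube algebra_simps)
      finally show ?thesis .
    qed
    then have "norm (LINT \<tau>:{0..t}|lborel. duhamel_integrand t \<epsilon> \<tau> - duhamel_integrand t (- \<epsilon>) \<tau> - h \<epsilon> \<tau>)
        \<le> B * \<epsilon> ^ 3 * (t - 0)"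
      using t by (intro norm_set_integral_Icc_le set_integral_diff(1) int_p int_m h_int) auto
    then show "norm (duhamel t \<epsilon> - duhamel t (- \<epsilon>) - \<i> * complex_of_real (\<epsilon> / sqrt (2 * pi)
      * (LINT \<tau>:{0..t}|lborel. (1 + (t - \<tau>) * \<eta> * \<epsilon>) * energy \<tau>))) \<le> (B * t) * \<epsilon> ^ 3"
      by (simp add: duhamel_def set_integral_diff(2) int_p int_m h_int set_integral_diff(1) h_integral algebra_simps)
  qed (use \<open>\<delta> > 0\<close> in simp)
  then show ?thesis
    by blast
qed

lemma FT_even_part_expansion:
  assumes t: "t \<in> {0..T}"
  shows "\<exists>K. \<forall>\<^sub>F \<epsilon> in at_right 0. mild_identity_at t \<epsilon> \<longrightarrow> mild_identity_at t (- \<epsilon>) \<longrightarrow>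
    norm (FT (u t) \<epsilon> + FT (u t) (- \<epsilon>) - 2 * (1 + complex_of_real (t * \<eta> * \<epsilon>)) * FT (u 0) 0) \<le> K * \<epsilon>\<^sup>2"
proof -
  have L0: "L2w 3 (u 0)"
    using L2w_u T_pos by simp
  obtain K_L where K_L: "\<forall>\<^sub>F \<epsilon> in at_right 0.
    norm (semigroup_mult \<beta> \<eta> t \<epsilon> * FT (u 0) \<epsilon> + semigroup_mult \<beta> \<eta> t (- \<epsilon>) * FT (u 0) (- \<epsilon>)
      - 2 * (1 + complex_of_real (t * \<eta> * \<epsilon>)) * FT (u 0) 0) \<le> K_L * \<epsilon>\<^sup>2"
    using semigroup_even_part_expansion[OF less_imp_le[OF \<beta>_pos] less_imp_le[OF \<eta>_pos] _
        L2w_3_moments(1,3)[OF L0]] t by auto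
  obtain K_N where K_N: "\<forall>\<^sub>F \<epsilon> in at_right 0.
      set_integrable lborel {0..t} (duhamel_integrand t \<epsilon>) \<longrightarrow>
      set_integrable lborel {0..t} (duhamel_integrand t (- \<epsilon>)) \<longrightarrow>
      norm (duhamel t \<epsilon> + duhamel t (- \<epsilon>)) \<le> K_N * \<epsilon>\<^sup>2"
    using duhamel_even_part_bound[OF t] by blast
  have "\<forall>\<^sub>F \<epsilon> in at_right 0. mild_identity_at t \<epsilon> \<longrightarrow> mild_identity_at t (- \<epsilon>) \<longrightarrow>
    norm (FT (u t) \<epsilon> + FT (u t) (- \<epsilon>) - 2 * (1 + complex_of_real (t * \<eta> * \<epsilon>)) * FT (u 0) 0)
      \<le> (K_L + K_N) * \<epsilon>\<^sup>2"
    using K_L K_N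
  proof eventually_elim
    case (elim \<epsilon>)
    show ?case
    proof (intro impI)
      assume p: "mild_identity_at t \<epsilon>" and m: "mild_identity_at t (- \<epsilon>)"
      have eq: "FT (u t) \<epsilon> + FT (u t) (- \<epsilon>) - 2 * (1 + complex_of_real (t * \<eta> * \<epsilon>)) * FT (u 0) 0
          = (semigroup_mult \<beta> \<eta> t \<epsilon> * FT (u 0) \<epsilon> + semigroup_mult \<beta> \<eta> t (- \<epsilon>) * FT (u 0) (- \<epsilon>)
            - 2 * (1 + complex_of_real (t * \<eta> * \<epsilon>)) * FT (u 0) 0) - (duhamel t \<epsilon> + duhamel t (- \<epsilon>))"
        using p m by (simp add: mild_identity_at_def)
      have "norm (duhamel t \<epsilon> + duhamel t (- \<epsilon>)) \<le> K_N * \<epsilon>\<^sup>2"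
        using elim(2) p m by (simp add: mild_identity_at_def)
      with elim(1) have "norm (FT (u t) \<epsilon> + FT (u t) (- \<epsilon>) - 2 * (1 + complex_of_real (t * \<eta> * \<epsilon>)) * FT (u 0) 0)
          \<le> K_L * \<epsilon>\<^sup>2 + K_N * \<epsilon>\<^sup>2"
        unfolding eq by (rule order_trans[OF norm_triangle_ineq4 add_mono])
      then show "norm (FT (u t) \<epsilon> + FT (u t) (- \<epsilon>) - 2 * (1 + complex_of_real (t * \<eta> * \<epsilon>)) * FT (u 0) 0)
          \<le> (K_L + K_N) * \<epsilon>\<^sup>2"
        by (simp add: distrib_right)
    qed
  qed
  then show ?thesis
    by blast
qed

lemma FT_odd_part_expansion:
  assumes t: "t \<in> {0..T}" and mass: "FT (u 0) 0 = 0"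
  shows "\<exists>K. \<forall>\<^sub>F \<epsilon> in at_right 0. mild_identity_at t \<epsilon> \<longrightarrow> mild_identity_at t (- \<epsilon>) \<longrightarrow>
    \<bar>\<epsilon> * (LINT \<tau>:{0..t}|lborel. (1 + (t - \<tau>) * \<eta> * \<epsilon>) * energy \<tau>)
      - 2 * sine_transform (u t) \<epsilon> + 2 * (1 + t * \<eta> * \<epsilon>) * sine_transform (u 0) \<epsilon>\<bar> \<le> K * \<epsilon> ^ 3"
proof -
  have L0: "L2w 3 (u 0)"
    using L2w_u T_pos by simp
  obtain K_L where K_L: "\<forall>\<^sub>F \<epsilon> in at_right 0.
    norm (semigroup_mult \<beta> \<eta> t \<epsilon> * FT (u 0) \<epsilon> - semigroup_mult \<beta> \<eta> t (- \<epsilon>) * FT (u 0) (- \<epsilon>)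
      - (1 + complex_of_real (t * \<eta> * \<epsilon>)) * (FT (u 0) \<epsilon> - FT (u 0) (- \<epsilon>))) \<le> K_L * \<epsilon> ^ 3"
    using semigroup_odd_part_expansion[OF less_imp_le[OF \<beta>_pos] less_imp_le[OF \<eta>_pos] _
        L2w_3_moments(1,2)[OF L0] mass] t by auto
  obtain K_N where K_N: "\<forall>\<^sub>F \<epsilon> in at_right 0.
      set_integrable lborel {0..t} (duhamel_integrand t \<epsilon>) \<longrightarrow>
      set_integrable lborel {0..t} (duhamel_integrand t (- \<epsilon>)) \<longrightarrow>
      norm (duhamel t \<epsilon> - duhamel t (- \<epsilon>) - \<i> * complex_of_real (\<epsilon> / sqrt (2 * pi)
        * (LINT \<tau>:{0..t}|lborel. (1 + (t - \<tau>) * \<eta> * \<epsilon>) * energy \<tau>))) \<le> K_N * \<epsilon> ^ 3"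
    using duhamel_odd_part_expansion[OF t] by blast
  have "\<forall>\<^sub>F \<epsilon> in at_right 0. mild_identity_at t \<epsilon> \<longrightarrow> mild_identity_at t (- \<epsilon>) \<longrightarrow>
    \<bar>\<epsilon> * (LINT \<tau>:{0..t}|lborel. (1 + (t - \<tau>) * \<eta> * \<epsilon>) * energy \<tau>)
      - 2 * sine_transform (u t) \<epsilon> + 2 * (1 + t * \<eta> * \<epsilon>) * sine_transform (u 0) \<epsilon>\<bar>
      \<le> (sqrt (2 * pi) * (K_L + K_N)) * \<epsilon> ^ 3"
    using K_L K_N
  proof eventually_elim
    case (elim \<epsilon>)
    show ?case
    proof (intro impI)
      assume p: "mild_identity_at t \<epsilon>" and m: "mild_identity_at t (- \<epsilon>)"
      define c where "c = sqrt (2 * pi)"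
      define I where "I = (LINT \<tau>:{0..t}|lborel. (1 + (t - \<tau>) * \<eta> * \<epsilon>) * energy \<tau>)"
      define St where "St = sine_transform (u t) \<epsilon>"
      define S0 where "S0 = sine_transform (u 0) \<epsilon>"
      define Q where "Q = \<epsilon> * I - 2 * St + 2 * (1 + t * \<eta> * \<epsilon>) * S0"
      define L where "L = semigroup_mult \<beta> \<eta> t \<epsilon> * FT (u 0) \<epsilon> - semigroup_mult \<beta> \<eta> t (- \<epsilon>) * FT (u 0) (- \<epsilon>)
        - (1 + complex_of_real (t * \<eta> * \<epsilon>)) * (FT (u 0) \<epsilon> - FT (u 0) (- \<epsilon>))"
      define N where "N = duhamel t \<epsilon> - duhamel t (- \<epsilon>) - \<i> * complex_of_real (\<epsilon> / c * I)"
      have odd_t: "FT (u t) \<epsilon> - FT (u t) (- \<epsilon>) = - 2 * \<i> * complex_of_real (St / c)"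
        unfolding St_def c_def by (rule FT_minus_FT_uminus[OF L2w_3_moments(1)[OF L2w_u[OF t]]])
      have odd_0: "FT (u 0) \<epsilon> - FT (u 0) (- \<epsilon>) = - 2 * \<i> * complex_of_real (S0 / c)"
        unfolding S0_def c_def by (rule FT_minus_FT_uminus[OF L2w_3_moments(1)[OF L0]])
      have "\<i> * complex_of_real (Q / c)
          = (FT (u t) \<epsilon> - FT (u t) (- \<epsilon>)) - (1 + complex_of_real (t * \<eta> * \<epsilon>)) * (FT (u 0) \<epsilon> - FT (u 0) (- \<epsilon>))
            + \<i> * complex_of_real (\<epsilon> / c * I)"
        unfolding odd_t odd_0 Q_def by (simp add: algebra_simps diff_divide_distrib add_divide_distrib)
      also have "\<dots> = L - N"
        using p m unfolding mild_identity_at_def L_def N_def by (simp only:) (simp add: algebra_simps)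
      finally have "norm (\<i> * complex_of_real (Q / c)) \<le> norm L + norm N"
        by (simp only: norm_triangle_ineq4)
      moreover have "norm L \<le> K_L * \<epsilon> ^ 3" "norm N \<le> K_N * \<epsilon> ^ 3"
        using elim p m by (simp_all add: L_def N_def I_def c_def mild_identity_at_def)
      moreover have "norm (\<i> * complex_of_real (Q / c)) = \<bar>Q\<bar> / c"
        by (simp only: norm_mult norm_ii norm_of_real) (simp add: c_def)
      ultimately have "\<bar>Q\<bar> / c \<le> (K_L + K_N) * \<epsilon> ^ 3"
        by (simp add: algebra_simps)
      then show "\<bar>\<epsilon> * (LINT \<tau>:{0..t}|lborel. (1 + (t - \<tau>) * \<eta> * \<epsilon>) * energy \<tau>)
          - 2 * sine_transform (u t) \<epsilon> + 2 * (1 + t * \<eta> * \<epsilon>) * sine_transform (u 0) \<epsilon>\<bar>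
        \<le> (sqrt (2 * pi) * (K_L + K_N)) * \<epsilon> ^ 3"
        by (simp add: divide_le_eq Q_def I_def St_def S0_def c_def mult_ac)
    qed
  qed
  then show ?thesis
    by blast
qed

lemma FT_initial_at_0_eq_0: "FT (u 0) 0 = 0"
proof -
  have T: "T \<in> {0..T}"
    using T_pos by simp
  obtain K where K: "\<forall>\<^sub>F \<epsilon> in at_right 0. mild_identity_at T \<epsilon> \<longrightarrow> mild_identity_at T (- \<epsilon>) \<longrightarrow>
      norm (FT (u T) \<epsilon> + FT (u T) (- \<epsilon>) - 2 * (1 + complex_of_real (T * \<eta> * \<epsilon>)) * FT (u 0) 0) \<le> K * \<epsilon>\<^sup>2"
    using FT_even_part_expansion[OF T] by blast
  define X where "X = (\<integral>x. \<bar>x\<^sup>2 * u T x\<bar> \<partial>lborel) / sqrt (2 * pi)"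
  have second: "norm (FT (u T) \<epsilon> + FT (u T) (- \<epsilon>) - 2 * FT (u T) 0) \<le> X * \<epsilon>\<^sup>2" for \<epsilon>
    using norm_FT_second_difference_le[OF L2w_3_moments(1,3)[OF L2w_u[OF T]], of \<epsilon>]
    by (simp add: X_def mult_ac)
  have "\<forall>\<^sub>F \<epsilon> in at_right 0. mild_identity_at T \<epsilon> \<longrightarrow> mild_identity_at T (- \<epsilon>) \<longrightarrow>
      norm (2 * (FT (u T) 0 - FT (u 0) 0) + \<epsilon> *\<^sub>R (- 2 * complex_of_real (T * \<eta>) * FT (u 0) 0) + \<epsilon> *\<^sub>R 0)
        \<le> (K + X) * \<epsilon>\<^sup>2"
    using K
  proof eventually_elim
    case (elim \<epsilon>)
    have eq: "2 * (FT (u T) 0 - FT (u 0) 0) + \<epsilon> *\<^sub>R (- 2 * complex_of_real (T * \<eta>) * FT (u 0) 0) + \<epsilon> *\<^sub>R 0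
        = (FT (u T) \<epsilon> + FT (u T) (- \<epsilon>) - 2 * (1 + complex_of_real (T * \<eta> * \<epsilon>)) * FT (u 0) 0)
          - (FT (u T) \<epsilon> + FT (u T) (- \<epsilon>) - 2 * FT (u T) 0)"
      by (simp add: scaleR_conv_of_real algebra_simps)
    show ?case
    proof (intro impI)
      assume "mild_identity_at T \<epsilon>" "mild_identity_at T (- \<epsilon>)"
      with elim have "norm (FT (u T) \<epsilon> + FT (u T) (- \<epsilon>) - 2 * (1 + complex_of_real (T * \<eta> * \<epsilon>)) * FT (u 0) 0)
          \<le> K * \<epsilon>\<^sup>2"
        by blast
      then have "norm (2 * (FT (u T) 0 - FT (u 0) 0) + \<epsilon> *\<^sub>R (- 2 * complex_of_real (T * \<eta>) * FT (u 0) 0) + \<epsilon> *\<^sub>R 0)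
          \<le> K * \<epsilon>\<^sup>2 + X * \<epsilon>\<^sup>2"
        unfolding eq by (rule order_trans[OF norm_triangle_ineq4 add_mono[OF _ second]])
      then show "norm (2 * (FT (u T) 0 - FT (u 0) 0) + \<epsilon> *\<^sub>R (- 2 * complex_of_real (T * \<eta>) * FT (u 0) 0)
          + \<epsilon> *\<^sub>R 0) \<le> (K + X) * \<epsilon>\<^sup>2"
        by (simp add: distrib_right)
    qed
  qed
  then have "2 * (FT (u T) 0 - FT (u 0) 0) = 0 \<and> - 2 * complex_of_real (T * \<eta>) * FT (u 0) 0 = 0"
    by (rule AE_expansion_coeffs_eq_0[OF AE_mild_identity_at[OF T] tendsto_const])
  then show ?thesis
    using T_pos \<eta>_pos by simp
qed

lemma set_integrable_energy:
  assumes "t \<le> T" "continuous_on {0..t} f"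
  shows "set_integrable lborel {0..t} (\<lambda>\<tau>. f \<tau> * energy \<tau>)"
  unfolding set_integrable_def using assms
  by (intro borel_integrable_compact continuous_intros continuous_on_subset[OF continuous_on_energy]) auto

lemma set_integral_affine_energy:
  assumes "t \<in> {0..T}"
  shows "(LINT \<tau>:{0..t}|lborel. (1 + (t - \<tau>) * \<eta> * \<epsilon>) * energy \<tau>)
    = (LINT \<tau>:{0..t}|lborel. energy \<tau>) + \<eta> * \<epsilon> * (LINT \<tau>:{0..t}|lborel. (t - \<tau>) * energy \<tau>)"
proof -
  have "(\<lambda>\<tau>. (1 + (t - \<tau>) * \<eta> * \<epsilon>) * energy \<tau>) = (\<lambda>\<tau>. 1 * energy \<tau> + (\<eta> * \<epsilon>) * ((t - \<tau>) * energy \<tau>))"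
    by (simp add: algebra_simps)
  then show ?thesis
    using assms set_integrable_energy[of t "\<lambda>_. 1"] set_integrable_energy[of t "\<lambda>\<tau>. t - \<tau>"]
    by (simp add: set_integral_add set_integrable_mult_right continuous_intros)
qed

lemma first_moment_identity:
  assumes t: "t \<in> {0..T}"
  shows "2 * t * (\<integral>x. x * u 0 x \<partial>lborel) + (LINT \<tau>:{0..t}|lborel. (t - \<tau>) * energy \<tau>) = 0"
proof -
  obtain K where K: "\<forall>\<^sub>F \<epsilon> in at_right 0. mild_identity_at t \<epsilon> \<longrightarrow> mild_identity_at t (- \<epsilon>) \<longrightarrow>
      \<bar>\<epsilon> * (LINT \<tau>:{0..t}|lborel. (1 + (t - \<tau>) * \<eta> * \<epsilon>) * energy \<tau>)
        - 2 * sine_transform (u t) \<epsilon> + 2 * (1 + t * \<eta> * \<epsilon>) * sine_transform (u 0) \<epsilon>\<bar> \<le> K * \<epsilon> ^ 3"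
    using FT_odd_part_expansion[OF t FT_initial_at_0_eq_0] by blast
  have L0: "L2w 3 (u 0)"
    using L2w_u T_pos by simp
  note Lt = L2w_u[OF t]
  define m where "m s = (\<integral>x. x * u s x \<partial>lborel)" for s
  define r where "r s \<epsilon> = (sine_transform (u s) \<epsilon> - \<epsilon> * m s) / \<epsilon>\<^sup>2" for s \<epsilon>
  define G1 where "G1 = (LINT \<tau>:{0..t}|lborel. energy \<tau>)"
  define G2 where "G2 = (LINT \<tau>:{0..t}|lborel. (t - \<tau>) * energy \<tau>)"
  define d where "d \<epsilon> = - 2 * r t \<epsilon> + 2 * (1 + t * \<eta> * \<epsilon>) * r 0 \<epsilon>" for \<epsilon>
  have r_lim: "(r s \<longlongrightarrow> 0) (at_right 0)" if "L2w 3 (u s)" for s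
    unfolding r_def m_def using L2w_3_moments[OF that]
    by (intro tendsto_mono[OF at_le tendsto_sine_transform_expansion]) auto
  have "(d \<longlongrightarrow> - 2 * 0 + 2 * (1 + t * \<eta> * 0) * 0) (at_right 0)"
    unfolding d_def by (intro tendsto_intros r_lim Lt L0)
  then have d_lim: "(d \<longlongrightarrow> 0) (at_right 0)"
    by simp
  note split = set_integral_affine_energy[OF t]
  \<comment> \<open>Divided by \<open>\<epsilon>\<close>, the odd part reads \<open>\<alpha> + \<epsilon> \<beta> + \<epsilon> d(\<epsilon>) = O(\<epsilon>\<^sup>2)\<close> with \<open>\<beta> = \<eta> (2 t m 0 + G2)\<close>.\<close>
  have "\<forall>\<^sub>F \<epsilon> in at_right 0. mild_identity_at t \<epsilon> \<longrightarrow> mild_identity_at t (- \<epsilon>) \<longrightarrow>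
      norm ((- 2 * m t + 2 * m 0 + G1) + \<epsilon> *\<^sub>R (\<eta> * (2 * t * m 0 + G2)) + \<epsilon> *\<^sub>R d \<epsilon>) \<le> K * \<epsilon>\<^sup>2"
    using K eventually_at_right_less
  proof eventually_elim
    case (elim \<epsilon>)
    show ?case
    proof (intro impI)
      assume "mild_identity_at t \<epsilon>" "mild_identity_at t (- \<epsilon>)"
      with elim(1) have bound: "\<bar>\<epsilon> * (LINT \<tau>:{0..t}|lborel. (1 + (t - \<tau>) * \<eta> * \<epsilon>) * energy \<tau>)
        - 2 * sine_transform (u t) \<epsilon> + 2 * (1 + t * \<eta> * \<epsilon>) * sine_transform (u 0) \<epsilon>\<bar> \<le> K * \<epsilon> ^ 3"
        by blast
      have "\<epsilon> * ((- 2 * m t + 2 * m 0 + G1) + \<epsilon> *\<^sub>R (\<eta> * (2 * t * m 0 + G2)) + \<epsilon> *\<^sub>R d \<epsilon>)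
          = \<epsilon> * (LINT \<tau>:{0..t}|lborel. (1 + (t - \<tau>) * \<eta> * \<epsilon>) * energy \<tau>)
            - 2 * sine_transform (u t) \<epsilon> + 2 * (1 + t * \<eta> * \<epsilon>) * sine_transform (u 0) \<epsilon>"
        unfolding split G1_def[symmetric] G2_def[symmetric] using elim(2)
        by (simp add: d_def r_def power2_eq_square field_simps)
      with bound have "\<epsilon> * \<bar>(- 2 * m t + 2 * m 0 + G1) + \<epsilon> *\<^sub>R (\<eta> * (2 * t * m 0 + G2)) + \<epsilon> *\<^sub>R d \<epsilon>\<bar>
          \<le> \<epsilon> * (K * \<epsilon>\<^sup>2)"
        using elim(2) by (simp only: abs_mult abs_of_pos power2_eq_square power3_eq_cube mult_ac)
      then show "norm ((- 2 * m t + 2 * m 0 + G1) + \<epsilon> *\<^sub>R (\<eta> * (2 * t * m 0 + G2)) + \<epsilon> *\<^sub>R d \<epsilon>) \<le> K * \<epsilon>\<^sup>2"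
        using elim(2) by simp
    qed
  qed
  then have "- 2 * m t + 2 * m 0 + G1 = 0 \<and> \<eta> * (2 * t * m 0 + G2) = 0"
    by (rule AE_expansion_coeffs_eq_0[OF AE_mild_identity_at[OF t] d_lim])
  then show ?thesis
    using \<eta>_pos by (simp add: m_def G2_def)
qed

lemma initial_first_moment_eq_0: "(\<integral>x. x * u 0 x \<partial>lborel) = 0"
proof -
  obtain W where W: "\<And>\<tau>. \<tau> \<in> {0..T} \<Longrightarrow> L2w_sq 3 (u \<tau>) \<le> W"
    using L2w_sq_bounded by blast
  define m0 where "m0 = (\<integral>x. x * u 0 x \<partial>lborel)"
  have "2 * \<bar>m0\<bar> \<le> W * t" if t: "0 < t" "t \<le> T" for t
  proof -
    have "norm (LINT \<tau>:{0..t}|lborel. (t - \<tau>) * energy \<tau>) \<le> (t * W) * (t - 0)"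
    proof (rule norm_set_integral_Icc_le)
      show "set_integrable lborel {0..t} (\<lambda>\<tau>. (t - \<tau>) * energy \<tau>)"
        using t by (intro set_integrable_energy continuous_intros) auto
      fix s assume s: "s \<in> {0..t}"
      then have "energy s \<le> W"
        using energy_le_L2w_sq[of s] W[of s] t by auto
      then show "norm ((t - s) * energy s) \<le> t * W"
        using s energy_nonneg[of s] by (simp add: abs_mult mult_mono)
    qed (use t in auto)
    then have "\<bar>2 * t * m0\<bar> \<le> t * W * t"
      using first_moment_identity[of t] t by (simp add: m0_def)
    then show ?thesis
      using t by (simp add: abs_mult mult_ac)
  qed
  then have "\<forall>\<^sub>F t in at_right 0. 2 * \<bar>m0\<bar> \<le> W * t"
    using T_pos by (intro eventually_at_rightI[where b = T]) auto
  moreover have "((\<lambda>t. W * t) \<longlongrightarrow> 0) (at_right 0)"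
    by (intro tendsto_mult_right_zero tendsto_ident_at)
  ultimately have "2 * \<bar>m0\<bar> \<le> 0"
    by (intro tendsto_lowerbound) auto
  then show ?thesis
    by (simp add: m0_def)
qed

lemma energy_eq_0:
  assumes "\<tau> \<in> {0..T}"
  shows "energy \<tau> = 0"
proof -
  have "(LINT \<tau>:{0..T}|lborel. (T - \<tau>) * energy \<tau>) = 0"
    using first_moment_identity[of T] initial_first_moment_eq_0 T_pos by simp
  then have vanish: "(T - s) * energy s = 0" if "s \<in> {0..T}" for s
    using T_pos that energy_nonneg
    by (intro continuous_nonneg_set_integral_eq_0[where h = "\<lambda>s. (T - s) * energy s"])
      (auto intro!: continuous_intros continuous_on_energy)
  have "energy s = 0" if "s \<in> {0..<T}" for s
    using vanish[of s] that by auto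
  moreover have "closure {0..<T} = {0..T}"
    using T_pos by simp
  ultimately show ?thesis
    using continuous_on_energy assms by (metis continuous_constant_on_closure)
qed

end

theorem theorem1p7:
  fixes \<beta> \<eta> T :: real and u :: "real \<Rightarrow> real \<Rightarrow> real"
  assumes "\<beta> > 0" and "\<eta> > 0" and "T > 0"
    and "mild_solution \<beta> \<eta> T u"
  shows "\<forall>t\<in>{0..T}. AE x in lborel. u t x = 0"
proof
  interpret F33_solution \<beta> \<eta> T u
    using assms by unfold_locales
  fix t assume t: "t \<in> {0..T}"
  have "AE x in lborel. (u t x)\<^sup>2 = 0"
    using energy_eq_0[OF t] L2w_3_square_moments(1)[OF L2w_u[OF t]]
    by (simp add: energy_def integral_nonneg_eq_0_iff_AE)
  then show "AE x in lborel. u t x = 0"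
    by eventually_elim simp
qed

end
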